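(* Let $L\subseteq\Sigma^*$ be a regular language. If $\kappa(L)=1$ and $L$ is closed, then $\kappa(L^* )\le 2$. If $\kappa(L)=n\ge 2$, then: 1. if $L$ is prefix-closed, $\kappa(L^* )\le 2^{n-2}+1$; 2. if $L$ is suffix-closed, $\kappa(L^* )\le n$ when $L=L^*$, and $\kappa(L^* )\le n-1$ when $L\ne L^*$; 3. if $L$ is factor-closed or subword-closed, $\kappa(L^* )\le 2$. The bounds are tight over every alphabet with $|\Sigma|\ge 2$. Specifically, for every $n\ge 2$: - there is a prefix-closed $L$ with $\kappa(L)=n$ and $\kappa(L^* )=2^{n-2}+1$; - there is a subword-closed $L$ with $\kappa(L)=n$ and $\kappa(L^* )=2$. For every $n\ge 3$: - there is a suffix-closed $L$ with $\kappa(L)=n$, $L=L^*$ and $\kappa(L^* )=n$; - there is a suffix-closed $L$ with $\kappa(L)=n$, $L\ne L^*$ and $\kappa(L^* )=n-1$.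
   Context: $\Sigma$ is a finite non-empty alphabet. $L_w=\{x\mid wx\in L\}$ is the left quotient of $L$ by $w$, and $\kappa(L)$ is the number of distinct quotients of $L$ (its state complexity). $L^*=\bigcup_{i\ge0}L^i$ is Kleene star. A language is prefix-closed (suffix-, factor-, subword-closed) if it contains every prefix (suffix, factor, subword) of each of its words, where subword means scattered subsequence. "Closed" means any of these four. *)

theory Defs
  imports Main "HOL-Library.Sublist"
begin

text \<open>Words over the alphabet Sigma = UNIV of a finite type 'a are lists; languages are sets of lists.\<close>

definition conc :: "'a list set \<Rightarrow> 'a list set \<Rightarrow> 'a list set" where
  "conc A B = {u @ v | u v. u \<in> A \<and> v \<in> B}"

fun lpow :: "'a list set \<Rightarrow> nat \<Rightarrow> 'a list set" where
  "lpow L 0 = {[]}"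
| "lpow L (Suc i) = conc L (lpow L i)"

definition kstar :: "'a list set \<Rightarrow> 'a list set" where
  "kstar L = (\<Union>i. lpow L i)"

inductive regular :: "'a list set \<Rightarrow> bool" where
  reg_empty: "regular {}"
| reg_eps: "regular {[]}"
| reg_letter: "regular {[a]}"
| reg_union: "regular A \<Longrightarrow> regular B \<Longrightarrow> regular (A \<union> B)"
| reg_conc: "regular A \<Longrightarrow> regular B \<Longrightarrow> regular (conc A B)"
| reg_star: "regular A \<Longrightarrow> regular (kstar A)"

definition lquot :: "'a list set \<Rightarrow> 'a list \<Rightarrow> 'a list set" where
  "lquot L w = {x. w @ x \<in> L}"

definition kappa :: "'a list set \<Rightarrow> nat" where
  "kappa L = card {lquot L w | w. True}"

definition prefix_closed :: "'a list set \<Rightarrow> bool" where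
  "prefix_closed L \<longleftrightarrow> (\<forall>w\<in>L. \<forall>u. prefix u w \<longrightarrow> u \<in> L)"

definition suffix_closed :: "'a list set \<Rightarrow> bool" where
  "suffix_closed L \<longleftrightarrow> (\<forall>w\<in>L. \<forall>u. suffix u w \<longrightarrow> u \<in> L)"

definition factor_closed :: "'a list set \<Rightarrow> bool" where
  "factor_closed L \<longleftrightarrow> (\<forall>w\<in>L. \<forall>u. sublist u w \<longrightarrow> u \<in> L)"

definition subword_closed :: "'a list set \<Rightarrow> bool" where
  "subword_closed L \<longleftrightarrow> (\<forall>w\<in>L. \<forall>u. subseq u w \<longrightarrow> u \<in> L)"

definition closed_lang :: "'a list set \<Rightarrow> bool" where
  "closed_lang L \<longleftrightarrow> prefix_closed L \<or> suffix_closed L \<or> factor_closed L \<or> subword_closed L"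

end

theory Submission
  imports Defs
begin

text \<open>
  If \<open>\<epsilon> \<in> L\<close>, every quotient of \<open>L\<^sup>*\<close> has the form
  \<open>(L\<^sup>*)\<^sub>w = \<Union>\<^sub>v L\<^sub>v L\<^sup>*\<close>, the union ranging over the suffixes \<open>v\<close> of \<open>w\<close> whose complementary
  prefix lies in \<open>L\<^sup>*\<close> (lemma \<open>lquot_kstar\<close>).  For prefix-closed \<open>L\<close> such a union is \<open>\<emptyset>\<close> or
  is determined by a set of quotients containing \<open>L\<close> and avoiding \<open>\<emptyset>\<close>, giving
  \<open>2\<^sup>n\<^sup>-\<^sup>2 + 1\<close>; for suffix-closed \<open>L\<close> the quotients \<open>L\<^sub>v\<close> are nested, so one term
  \<open>L\<^sub>v L\<^sup>*\<close> suffices, giving \<open>n\<close>, and \<open>n - 1\<close> when \<open>L \<noteq> L\<^sup>*\<close>; factor-closed languages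
  have \<open>L\<^sup>* = B\<^sup>*\<close> for a set of letters \<open>B\<close>.  None of these bounds needs regularity.

  Witnesses are languages of deterministic automata, whose regularity is
  shown once and for all by the McNaughton--Yamada construction, and whose quotients are
  counted through distinguishable reachable states.  The star of the prefix-closed witness is
  recognized by a subset construction; all \<open>2\<^sup>n\<^sup>-\<^sup>2 + 1\<close> candidate sets are reachable
  (an induction on their size using a rotation of the states) and pairwise separated
  (by words that play a survival game on that rotation).
\<close>

section \<open>Concatenation and Kleene star\<close>

lemma conc_iff: "x \<in> conc A B \<longleftrightarrow> (\<exists>u v. x = u @ v \<and> u \<in> A \<and> v \<in> B)"
  unfolding conc_def by blast

lemma concI: "u \<in> A \<Longrightarrow> v \<in> B \<Longrightarrow> u @ v \<in> conc A B"
  unfolding conc_def by blast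

lemma kstar_iff: "x \<in> kstar L \<longleftrightarrow> (\<exists>i. x \<in> lpow L i)"
  unfolding kstar_def by blast

lemma kstar_Nil [simp]: "[] \<in> kstar L"
  unfolding kstar_iff by (rule exI[of _ 0]) simp

lemma kstar_cons: "u \<in> L \<Longrightarrow> v \<in> kstar L \<Longrightarrow> u @ v \<in> kstar L"
proof -
  assume "u \<in> L" "v \<in> kstar L"
  then obtain i where "v \<in> lpow L i" by (auto simp: kstar_iff)
  then have "u @ v \<in> lpow L (Suc i)" using \<open>u \<in> L\<close> by (auto simp: conc_iff)
  then show ?thesis unfolding kstar_iff by blast
qed

lemma kstar_incl: "u \<in> L \<Longrightarrow> u \<in> kstar L"
  using kstar_cons[of u L "[]"] by simp

lemma kstar_induct [consumes 1, case_names Nil App]: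
  assumes "x \<in> kstar L" "P []" "\<And>u v. u \<in> L \<Longrightarrow> v \<in> kstar L \<Longrightarrow> P v \<Longrightarrow> P (u @ v)"
  shows "P x"
proof -
  from assms(1) obtain i where "x \<in> lpow L i" by (auto simp: kstar_iff)
  then show ?thesis
  proof (induction i arbitrary: x)
    case 0
    then show ?case using assms(2) by simp
  next
    case (Suc i)
    then obtain u v where "x = u @ v" "u \<in> L" "v \<in> lpow L i" by (auto simp: conc_iff)
    moreover have "v \<in> kstar L" using \<open>v \<in> lpow L i\<close> by (auto simp: kstar_iff)
    ultimately show ?case using Suc assms(3) by blast
  qed
qed

lemma kstar_app: "u \<in> kstar L \<Longrightarrow> v \<in> kstar L \<Longrightarrow> u @ v \<in> kstar L"
  by (induction u rule: kstar_induct) (auto intro: kstar_cons)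

lemma kstar_eq_self:
  assumes "[] \<in> L" "\<And>u v. u \<in> L \<Longrightarrow> v \<in> L \<Longrightarrow> u @ v \<in> L"
  shows "kstar L = L"
proof
  show "kstar L \<subseteq> L"
  proof
    fix x assume "x \<in> kstar L"
    then show "x \<in> L" by (induction x rule: kstar_induct) (use assms in auto)
  qed
qed (auto intro: kstar_incl)

lemma kstar_mono: "A \<subseteq> B \<Longrightarrow> kstar A \<subseteq> kstar B"
proof
  fix x assume AB: "A \<subseteq> B" and xA: "x \<in> kstar A"
  show "x \<in> kstar B"
    using xA by (induction x rule: kstar_induct) (use AB in \<open>auto intro: kstar_cons\<close>)
qed

lemma kstar_singleton_word: "[c] \<in> kstar L \<Longrightarrow> [c] \<in> L"
proof -
  have "x \<in> kstar L \<Longrightarrow> x = [c] \<longrightarrow> x \<in> L" for x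
    by (induction x rule: kstar_induct) (auto simp: append_eq_Cons_conv)
  then show "[c] \<in> kstar L \<Longrightarrow> [c] \<in> L" by blast
qed

section \<open>Quotients of a star\<close>

lemma lquot_iff [simp]: "x \<in> lquot L w \<longleftrightarrow> w @ x \<in> L"
  by (simp add: lquot_def)

text \<open>If \<open>w x \<in> L\<^sup>*\<close>, then the factor of \<open>L\<close> that straddles the cut between \<open>w\<close>
  and \<open>x\<close> splits both words: \<open>w = u v\<close> and \<open>x = y z\<close> with
  \<open>u, z \<in> L\<^sup>*\<close> and \<open>v y \<in> L\<close>.\<close>
lemma kstar_split:
  assumes "[] \<in> L" "w @ x \<in> kstar L"
  shows "\<exists>u v y z. w = u @ v \<and> u \<in> kstar L \<and> x = y @ z \<and> v @ y \<in> L \<and> z \<in> kstar L"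
proof -
  have "s \<in> kstar L \<Longrightarrow> s = w @ x \<Longrightarrow>
      \<exists>u v y z. w = u @ v \<and> u \<in> kstar L \<and> x = y @ z \<and> v @ y \<in> L \<and> z \<in> kstar L" for s
  proof (induction s arbitrary: w x rule: kstar_induct)
    case Nil
    then show ?case using assms(1) by (intro exI[of _ "[]"]) auto
  next
    case (App a b)
    show ?case
    proof (cases "length w \<le> length a")
      case True
      with App.prems obtain y where "a = w @ y" "x = y @ b"
        by (metis append_eq_append_conv_if append_take_drop_id)
      then show ?thesis using App by (intro exI[of _ "[]"] exI[of _ w] exI[of _ y] exI[of _ b]) auto
    next
      case False
      with App.prems obtain w' where "w = a @ w'" "b = w' @ x"
        by (metis append_eq_append_conv_if append_take_drop_id)
      with App.IH obtain u v y z
        where "w' = u @ v" "u \<in> kstar L" "x = y @ z" "v @ y \<in> L" "z \<in> kstar L"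
        by blast
      then show ?thesis using \<open>w = a @ w'\<close> App.hyps
        by (intro exI[of _ "a @ u"] exI[of _ v] exI[of _ y] exI[of _ z]) (auto intro: kstar_cons)
    qed
  qed
  then show ?thesis using assms(2) by blast
qed

text \<open>The \emph{star tails} of \<open>w\<close> are the suffixes \<open>v\<close> of \<open>w\<close> whose complementary prefix
  lies in \<open>L\<^sup>*\<close>; they record all ways of being in the middle of a factor of \<open>L\<close>.\<close>
definition star_tails :: "'a list set \<Rightarrow> 'a list \<Rightarrow> 'a list set" where
  "star_tails L w = {v. \<exists>u. w = u @ v \<and> u \<in> kstar L}"

lemma self_in_star_tails: "w \<in> star_tails L w"
  unfolding star_tails_def by (intro CollectI exI[of _ "[]"]) simp

lemma Nil_in_star_tails: "w \<in> kstar L \<Longrightarrow> [] \<in> star_tails L w"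
  unfolding star_tails_def by simp

text \<open>Every quotient of \<open>L\<^sup>*\<close> is thus determined by a set of quotients of \<open>L\<close>.\<close>
lemma lquot_kstar:
  assumes "[] \<in> L"
  shows "lquot (kstar L) w = (\<Union>v\<in>star_tails L w. conc (lquot L v) (kstar L))"
proof
  show "lquot (kstar L) w \<subseteq> (\<Union>v\<in>star_tails L w. conc (lquot L v) (kstar L))"
  proof
    fix x assume "x \<in> lquot (kstar L) w"
    then obtain u v y z where "w = u @ v" "u \<in> kstar L" "x = y @ z" "v @ y \<in> L" "z \<in> kstar L"
      using kstar_split[OF assms, of w x] by auto
    then show "x \<in> (\<Union>v\<in>star_tails L w. conc (lquot L v) (kstar L))"
      by (auto simp: star_tails_def conc_iff)
  qed
next
  show "(\<Union>v\<in>star_tails L w. conc (lquot L v) (kstar L)) \<subseteq> lquot (kstar L) w"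
  proof
    fix x assume "x \<in> (\<Union>v\<in>star_tails L w. conc (lquot L v) (kstar L))"
    then obtain u v y z where "w = u @ v" "u \<in> kstar L" "x = y @ z" "v @ y \<in> L" "z \<in> kstar L"
      by (auto simp: star_tails_def conc_iff)
    then have "w @ x = u @ ((v @ y) @ z)" by simp
    then show "x \<in> lquot (kstar L) w"
      using \<open>u \<in> kstar L\<close> \<open>v @ y \<in> L\<close> \<open>z \<in> kstar L\<close>
      by (metis kstar_app kstar_cons lquot_iff)
  qed
qed

lemma kappa_le_card:
  assumes "\<And>w. lquot K w \<in> f ` A" "finite A"
  shows "kappa K \<le> card A"
proof -
  have "kappa K \<le> card (f ` A)" unfolding kappa_def
    using assms by (intro card_mono) auto
  also have "\<dots> \<le> card A" by (rule card_image_le[OF assms(2)])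
  finally show ?thesis .
qed

lemma finite_quotients: "kappa L \<ge> 1 \<Longrightarrow> finite {lquot L w | w. True}"
  unfolding kappa_def using card.infinite by fastforce

lemma self_in_quotients: "L \<in> {lquot L w | w. True}"
  by (auto intro!: exI[of _ "[]"] simp: lquot_def)

lemma kappa_one_lquot:
  assumes "kappa L = 1"
  shows "lquot L w = L"
proof -
  obtain K where K: "{lquot L w | w. True} = {K}"
    using assms unfolding kappa_def by (meson card_1_singletonE)
  then have "L = K" using self_in_quotients[of L] by auto
  with K show ?thesis by auto
qed

lemma kappa_empty: "kappa {} = 1"
proof -
  have quots: "{lquot {} w | w. True} = {{}}" by (auto simp: lquot_def)
  show ?thesis unfolding kappa_def quots by simp
qed

lemma kappa_UNIV: "kappa UNIV = 1"
proof -
  have quots: "{lquot UNIV w | w. True} = {UNIV}" by (auto simp: lquot_def)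
  show ?thesis unfolding kappa_def quots by simp
qed

lemma kappa_one_iff: "kappa L = 1 \<longleftrightarrow> L = {} \<or> L = UNIV"
proof
  assume "kappa L = 1"
  then have "lquot L w = L" for w by (rule kappa_one_lquot)
  then have "[] \<in> L \<longleftrightarrow> w \<in> L" for w by (metis append_Nil2 lquot_iff)
  then show "L = {} \<or> L = UNIV" by blast
qed (auto simp: kappa_empty kappa_UNIV)

section \<open>Upper bounds\<close>

text \<open>A factor-closed language contains every letter of its words, so its star is the set of
  all words over the letters \<open>c\<close> with \<open>[c] \<in> L\<close>.\<close>
lemma factor_closed_kstar:
  assumes "factor_closed L"
  shows "kstar L = {x. set x \<subseteq> {c. [c] \<in> L}}"
proof
  have letters: "set x \<subseteq> {c. [c] \<in> L}" if "x \<in> L" for x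
  proof
    fix c assume "c \<in> set x"
    then obtain p s where "x = p @ c # s" by (meson split_list)
    then have "sublist [c] x" by (auto simp: sublist_def)
    then show "c \<in> {c. [c] \<in> L}" using assms that unfolding factor_closed_def by blast
  qed
  show "kstar L \<subseteq> {x. set x \<subseteq> {c. [c] \<in> L}}"
  proof
    fix x assume "x \<in> kstar L"
    then show "x \<in> {x. set x \<subseteq> {c. [c] \<in> L}}"
      by (induction x rule: kstar_induct) (auto dest: letters)
  qed
  show "{x. set x \<subseteq> {c. [c] \<in> L}} \<subseteq> kstar L"
  proof
    fix x assume "x \<in> {x. set x \<subseteq> {c. [c] \<in> L}}"
    then show "x \<in> kstar L"
      by (induction x) (auto intro: kstar_cons[of "[_]", simplified])
  qed
qed

lemma kappa_words_over_le_2: "kappa {x. set x \<subseteq> B} \<le> 2"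
proof -
  have "lquot {x. set x \<subseteq> B} w \<in> (\<lambda>b. if b then {x. set x \<subseteq> B} else {}) ` UNIV" for w
    by (rule image_eqI[of _ _ "set w \<subseteq> B"]) auto
  from kappa_le_card[OF this] show ?thesis by simp
qed

lemma factor_closed_kappa_kstar: "factor_closed L \<Longrightarrow> kappa (kstar L) \<le> 2"
  by (simp add: factor_closed_kstar kappa_words_over_le_2)

lemma subword_closed_imp_factor_closed: "subword_closed L \<Longrightarrow> factor_closed L"
  unfolding subword_closed_def factor_closed_def by (meson sublist_imp_subseq)

text \<open>A language with one quotient is \<open>\<emptyset>\<close> or \<open>\<Sigma>\<^sup>*\<close>, both factor-closed; no closure
  hypothesis is needed for the bound.\<close>
lemma kappa_one_kappa_kstar:
  assumes "kappa L = 1"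
  shows "kappa (kstar L) \<le> 2"
proof (rule factor_closed_kappa_kstar)
  have "L = {} \<or> L = UNIV" using assms kappa_one_iff by blast
  then show "factor_closed L" unfolding factor_closed_def by blast
qed

lemma kappa_ge_2_nonempty: "kappa L \<ge> 2 \<Longrightarrow> L \<noteq> {}"
  by (cases "L = {}") (simp_all add: kappa_empty)

lemma prefix_closed_Nil: "prefix_closed L \<Longrightarrow> L \<noteq> {} \<Longrightarrow> [] \<in> L"
  unfolding prefix_closed_def using Nil_prefix by blast

lemma suffix_closed_Nil: "suffix_closed L \<Longrightarrow> L \<noteq> {} \<Longrightarrow> [] \<in> L"
  unfolding suffix_closed_def using Nil_suffix by blast

lemma prefix_closed_lquot_empty: "prefix_closed L \<Longrightarrow> v \<notin> L \<Longrightarrow> lquot L v = {}"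
  unfolding prefix_closed_def by auto

text \<open>For prefix-closed \<open>L\<close>, every nonempty quotient of \<open>L\<^sup>*\<close> has the form
  \<open>\<Union>K\<in>{L} \<union> U. K L\<^sup>*\<close> with \<open>U\<close> a set of quotients of \<open>L\<close> other than \<open>\<emptyset>\<close> and \<open>L\<close>:
  empty quotients contribute nothing, and any nonempty one already contains \<open>L\<^sup>* \<supseteq> L L\<^sup>*\<close>.\<close>
lemma prefix_closed_lquot_kstar:
  fixes w :: "'a list"
  assumes pc: "prefix_closed L" and eL: "[] \<in> L"
  defines "U \<equiv> lquot L ` star_tails L w - {{}, L}"
  shows "lquot (kstar L) w = {} \<or> lquot (kstar L) w = (\<Union>K\<in>insert L U. conc K (kstar L))"
proof -
  define U0 where "U0 = lquot L ` star_tails L w"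
  have quot: "lquot (kstar L) w = (\<Union>K\<in>U0. conc K (kstar L))"
    unfolding lquot_kstar[OF eL] U0_def by auto
  have conc_empty: "conc {} (kstar L) = {}" by (simp add: conc_def)
  show ?thesis
  proof (cases "U0 \<subseteq> {{}}")
    case True
    then show ?thesis unfolding quot using conc_empty by auto
  next
    case False
    then obtain v where v: "v \<in> star_tails L w" "lquot L v \<noteq> {}" unfolding U0_def by auto
    then have "[] \<in> lquot L v" using prefix_closed_lquot_empty[OF pc] by fastforce
    then have "kstar L \<subseteq> conc (lquot L v) (kstar L)" by (force simp: conc_def)
    then have star_sub: "kstar L \<subseteq> lquot (kstar L) w" unfolding quot U0_def using v(1) by blast
    have "conc L (kstar L) \<subseteq> kstar L" by (auto simp: conc_iff intro: kstar_cons)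
    then have "(\<Union>K\<in>insert L U. conc K (kstar L)) \<subseteq> lquot (kstar L) w"
      using star_sub unfolding quot U_def U0_def by blast
    moreover have "lquot (kstar L) w \<subseteq> (\<Union>K\<in>insert L U. conc K (kstar L))"
    proof
      fix x assume "x \<in> lquot (kstar L) w"
      then obtain K where "K \<in> U0" "x \<in> conc K (kstar L)" unfolding quot by blast
      moreover have "K \<noteq> {}" using \<open>x \<in> conc K (kstar L)\<close> conc_empty by auto
      ultimately show "x \<in> (\<Union>K\<in>insert L U. conc K (kstar L))"
        unfolding U_def U0_def[symmetric] by (cases "K = L") auto
    qed
    ultimately show ?thesis by blast
  qed
qed

text \<open>Counting: besides \<open>\<emptyset>\<close>, the quotients of \<open>L\<^sup>*\<close> are indexed by subsets of the
  \<open>n - 2\<close> quotients of \<open>L\<close> different from \<open>\<emptyset>\<close> and \<open>L\<close>; here \<open>\<emptyset>\<close> is a quotient of \<open>L\<close>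
  because \<open>L \<noteq> \<Sigma>\<^sup>*\<close>.\<close>
theorem prefix_closed_kappa_kstar:
  assumes pc: "prefix_closed L" and n: "kappa L = n" "n \<ge> 2"
  shows "kappa (kstar L) \<le> 2 ^ (n - 2) + 1"
proof -
  define Q where "Q = {lquot L w | w. True}"
  have finQ: "finite Q" unfolding Q_def using n by (intro finite_quotients) simp
  have eL: "[] \<in> L" using prefix_closed_Nil[OF pc] kappa_ge_2_nonempty[of L] n by simp
  have "L \<noteq> UNIV"
  proof
    assume "L = UNIV"
    then have "kappa L = 1" by (simp only: kappa_UNIV)
    then show False using n by simp
  qed
  then obtain v where "v \<notin> L" by auto
  then have "{} \<in> Q" unfolding Q_def using prefix_closed_lquot_empty[OF pc] by blast
  moreover have "L \<in> Q" "L \<noteq> {}" unfolding Q_def using self_in_quotients eL by auto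
  moreover have "card Q = n" using n unfolding kappa_def Q_def by simp
  ultimately have card_rest: "card (Q - {{}, L}) = n - 2"
    using finQ by (simp add: card_Diff_subset)
  define f where "f = (\<lambda>U. case U of None \<Rightarrow> {} | Some U \<Rightarrow> (\<Union>K\<in>insert L U. conc K (kstar L)))"
  have "lquot (kstar L) w \<in> f ` insert None (Some ` Pow (Q - {{}, L}))" for w
  proof -
    define U where "U = lquot L ` star_tails L w - {{}, L}"
    have "U \<in> Pow (Q - {{}, L})" unfolding U_def Q_def by auto
    moreover have "lquot (kstar L) w = f None \<or> lquot (kstar L) w = f (Some U)"
      unfolding f_def U_def using prefix_closed_lquot_kstar[OF pc eL, of w] by simp
    ultimately show ?thesis by blast
  qed
  then have "kappa (kstar L) \<le> card (insert None (Some ` Pow (Q - {{}, L})))"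
    by (rule kappa_le_card) (simp add: finQ)
  also have "\<dots> = 2 ^ (n - 2) + 1"
    using finQ card_rest by (simp add: card_image card_Pow)
  finally show ?thesis .
qed

lemma lquot_Nil [simp]: "lquot L [] = L"
  by (simp add: lquot_def)

lemma suffix_closed_lquot_mono:
  "suffix_closed L \<Longrightarrow> lquot L (p @ v) \<subseteq> lquot L v"
  unfolding suffix_closed_def suffix_def by auto

lemma suffix_closed_lquot_subset: "suffix_closed L \<Longrightarrow> lquot L v \<subseteq> L"
  using suffix_closed_lquot_mono[of L v "[]"] by simp

text \<open>For suffix-closed \<open>L\<close>, the quotients \<open>L\<^sub>v\<close> grow as the star tail \<open>v\<close> gets shorter,
  so the union in \<open>lquot_kstar\<close> is attained at the shortest star tail:
  every quotient of \<open>L\<^sup>*\<close> is \<open>K L\<^sup>*\<close> for a single quotient \<open>K\<close> of \<open>L\<close>.\<close>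
lemma suffix_closed_lquot_kstar:
  assumes sc: "suffix_closed L" and eL: "[] \<in> L"
  shows "\<exists>v. lquot (kstar L) w = conc (lquot L v) (kstar L)"
proof -
  obtain v0 where v0: "v0 \<in> star_tails L w"
    and shortest: "\<And>v. v \<in> star_tails L w \<Longrightarrow> length v0 \<le> length v"
    using ex_has_least_nat[of "\<lambda>v. v \<in> star_tails L w" w length] self_in_star_tails by blast
  have "lquot L v \<subseteq> lquot L v0" if "v \<in> star_tails L w" for v
  proof -
    have "suffix v w" "suffix v0 w" using that v0 unfolding star_tails_def suffix_def by blast+
    then have "suffix v0 v" using suffix_length_suffix shortest[OF that] by blast
    then show ?thesis using suffix_closed_lquot_mono[OF sc] unfolding suffix_def by blast
  qed
  then have "(\<Union>v\<in>star_tails L w. conc (lquot L v) (kstar L)) \<subseteq> conc (lquot L v0) (kstar L)"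
    unfolding conc_def by blast
  moreover have "conc (lquot L v0) (kstar L) \<subseteq> (\<Union>v\<in>star_tails L w. conc (lquot L v) (kstar L))"
    using v0 by blast
  ultimately have "(\<Union>v\<in>star_tails L w. conc (lquot L v) (kstar L)) = conc (lquot L v0) (kstar L)"
    by (rule antisym)
  then show ?thesis unfolding lquot_kstar[OF eL] by blast
qed

text \<open>If \<open>v \<in> L\<close> then \<open>\<epsilon> \<in> L\<^sub>v \<subseteq> L\<close>, so \<open>L\<^sub>v L\<^sup>* = L\<^sup>*\<close>.\<close>
lemma suffix_closed_conc_kstar:
  assumes sc: "suffix_closed L" and "v \<in> L"
  shows "conc (lquot L v) (kstar L) = kstar L"
proof
  show "conc (lquot L v) (kstar L) \<subseteq> kstar L"
  proof
    fix x assume "x \<in> conc (lquot L v) (kstar L)"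
    then obtain y z where "x = y @ z" "y \<in> lquot L v" "z \<in> kstar L" by (auto simp: conc_iff)
    then show "x \<in> kstar L"
      using suffix_closed_lquot_subset[OF sc, of v] kstar_cons[of y L z] by blast
  qed
  show "kstar L \<subseteq> conc (lquot L v) (kstar L)"
    using \<open>v \<in> L\<close> concI[of "[]" "lquot L v"] by force
qed

text \<open>If \<open>L \<noteq> L\<^sup>*\<close>, some \<open>v \<in> L\<close> has \<open>L\<^sub>v \<noteq> L\<close>: otherwise \<open>L\<close> would be closed under
  concatenation.\<close>
lemma lquot_ne_self_if_ne_kstar:
  assumes "[] \<in> L" "L \<noteq> kstar L"
  obtains v where "v \<in> L" "lquot L v \<noteq> L"
proof (rule ccontr)
  assume no_witness: "\<not> thesis"
  have "lquot L v = L" if "v \<in> L" for v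
    using no_witness \<open>\<And>v. v \<in> L \<Longrightarrow> lquot L v \<noteq> L \<Longrightarrow> thesis\<close> that by blast
  then have "kstar L = L" by (intro kstar_eq_self[OF assms(1)]) (metis lquot_iff)
  with assms(2) show False by simp
qed

text \<open>The quotients of \<open>L\<^sup>*\<close> are images of the \<open>n\<close> quotients of \<open>L\<close>; if \<open>L \<noteq> L\<^sup>*\<close>,
  the quotient \<open>L\<close> itself and some other quotient \<open>L\<^sub>v\<close> (\<open>v \<in> L\<close>) have the same image \<open>L\<^sup>*\<close>.\<close>
theorem suffix_closed_kappa_kstar:
  assumes sc: "suffix_closed L" and n: "kappa L = n" "n \<ge> 2"
  shows "kappa (kstar L) \<le> n" and "L \<noteq> kstar L \<Longrightarrow> kappa (kstar L) \<le> n - 1"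
proof -
  define Q where "Q = {lquot L w | w. True}"
  define g where "g K = conc K (kstar L)" for K
  have finQ: "finite Q" unfolding Q_def using n by (intro finite_quotients) simp
  have cardQ: "card Q = n" using n unfolding kappa_def Q_def by simp
  have LQ: "L \<in> Q" unfolding Q_def by (rule self_in_quotients)
  have eL: "[] \<in> L" using suffix_closed_Nil[OF sc] kappa_ge_2_nonempty[of L] n by simp
  have quot: "lquot (kstar L) w \<in> g ` Q" for w
    using suffix_closed_lquot_kstar[OF sc eL, of w] unfolding g_def Q_def by blast
  show "kappa (kstar L) \<le> n"
    using kappa_le_card[OF quot finQ] cardQ by simp
  assume "L \<noteq> kstar L"
  then obtain v where v: "v \<in> L" "lquot L v \<noteq> L"
    using lquot_ne_self_if_ne_kstar eL by blast
  have gL: "g L = g (lquot L v)"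
    using suffix_closed_conc_kstar[OF sc v(1)] suffix_closed_conc_kstar[OF sc eL]
    unfolding g_def lquot_Nil by metis
  have "lquot L v \<in> Q - {L}" unfolding Q_def using v by blast
  then have "g K \<in> g ` (Q - {L})" if "K \<in> Q" for K
    using that gL by (metis Diff_iff image_eqI singletonD)
  then have "lquot (kstar L) w \<in> g ` (Q - {L})" for w using quot[of w] by (metis imageE)
  then have "kappa (kstar L) \<le> card (Q - {L})"
    by (rule kappa_le_card) (use finQ in simp_all)
  also have "\<dots> = n - 1" using cardQ LQ finQ by (simp add: card_Diff_singleton)
  finally show "kappa (kstar L) \<le> n - 1" .
qed

section \<open>Deterministic automata\<close>

lemma regular_singleton: "regular {w}"
proof (induction w)
  case Nil
  then show ?case by (rule reg_eps)
next
  case (Cons c w)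
  have "{c # w} = conc {[c]} {w}" by (auto simp: conc_def)
  then show ?case using reg_conc[OF reg_letter Cons] by simp
qed

lemma regular_finite: "finite A \<Longrightarrow> regular A"
proof (induction A rule: finite_induct)
  case empty
  then show ?case by (rule reg_empty)
next
  case (insert w A)
  have "insert w A = {w} \<union> A" by auto
  then show ?case using reg_union[OF regular_singleton insert.IH] by simp
qed

lemma regular_UN: "finite I \<Longrightarrow> (\<And>i. i \<in> I \<Longrightarrow> regular (f i)) \<Longrightarrow> regular (\<Union>i\<in>I. f i)"
proof (induction I rule: finite_induct)
  case empty
  then show ?case by (simp add: reg_empty)
next
  case (insert i I)
  have "(\<Union>j\<in>insert i I. f j) = f i \<union> (\<Union>j\<in>I. f j)" by auto
  moreover have "regular (f i)" "regular (\<Union>j\<in>I. f j)" using insert by simp_all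
  ultimately show ?case using reg_union by simp
qed

definition runs_via :: "('q \<Rightarrow> 'a \<Rightarrow> 'q) \<Rightarrow> 'q set \<Rightarrow> 'q \<Rightarrow> 'q \<Rightarrow> 'a list set" where
  "runs_via \<delta> X p q =
     {w. foldl \<delta> p w = q \<and> (\<forall>k. 0 < k \<and> k < length w \<longrightarrow> foldl \<delta> p (take k w) \<in> X)}"

lemma runs_via_mono: "X \<subseteq> Y \<Longrightarrow> runs_via \<delta> X p q \<subseteq> runs_via \<delta> Y p q"
  unfolding runs_via_def by blast

lemma runs_via_append:
  assumes u: "u \<in> runs_via \<delta> Y p r" and v: "v \<in> runs_via \<delta> Y r q" and r: "r \<in> Y"
  shows "u @ v \<in> runs_via \<delta> Y p q"
  unfolding runs_via_def
proof (intro CollectI conjI allI impI)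
  show "foldl \<delta> p (u @ v) = q" using u v by (simp add: runs_via_def)
  fix k assume k: "0 < k \<and> k < length (u @ v)"
  consider "k < length u" | "k = length u" | "length u < k" by linarith
  then show "foldl \<delta> p (take k (u @ v)) \<in> Y"
  proof cases
    case 1
    then show ?thesis using u k by (simp add: runs_via_def)
  next
    case 2
    then show ?thesis using u r by (simp add: runs_via_def)
  next
    case 3
    then have "foldl \<delta> r (take (k - length u) v) \<in> Y" using v k by (simp add: runs_via_def)
    then show ?thesis using 3 u by (simp add: runs_via_def)
  qed
qed

lemma runs_via_split_first:
  assumes w: "w \<in> runs_via \<delta> (insert s X) p q" and nw: "w \<notin> runs_via \<delta> X p q"
  shows "\<exists>u v. w = u @ v \<and> u \<noteq> [] \<and> u \<in> runs_via \<delta> X p s \<and> v \<in> runs_via \<delta> (insert s X) s q"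
proof -
  have fw: "foldl \<delta> p w = q" using w by (simp add: runs_via_def)
  define P where "P k \<longleftrightarrow> 0 < k \<and> k < length w \<and> foldl \<delta> p (take k w) = s" for k
  obtain k0 where "P k0" using w nw fw unfolding runs_via_def P_def by blast
  then obtain k where Pk: "P k" and kmin: "\<And>k'. P k' \<Longrightarrow> k \<le> k'"
    using ex_has_least_nat[of P k0 "\<lambda>x. x"] by blast
  define u where "u = take k w"
  define v where "v = drop k w"
  have wuv: "w = u @ v" unfolding u_def v_def by simp
  have lu: "length u = k" and fu: "foldl \<delta> p u = s" using Pk unfolding u_def P_def by auto
  have "u \<in> runs_via \<delta> X p s"
    unfolding runs_via_def
  proof (intro CollectI conjI allI impI)
    fix k' assume k': "0 < k' \<and> k' < length u"
    then have "foldl \<delta> p (take k' w) \<in> insert s X" "\<not> P k'"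
      using w lu Pk kmin[of k'] unfolding runs_via_def P_def by auto
    then show "foldl \<delta> p (take k' u) \<in> X" using k' lu Pk unfolding u_def P_def by auto
  qed (rule fu)
  moreover have "v \<in> runs_via \<delta> (insert s X) s q"
    unfolding runs_via_def
  proof (intro CollectI conjI allI impI)
    show "foldl \<delta> s v = q" using fw fu wuv by simp
    fix k' assume k': "0 < k' \<and> k' < length v"
    then have "0 < k + k' \<and> k + k' < length w" using lu wuv by auto
    then have "foldl \<delta> p (take (k + k') w) \<in> insert s X" using w unfolding runs_via_def by blast
    moreover have "take (k + k') w = u @ take k' v" using wuv lu by simp
    ultimately show "foldl \<delta> s (take k' v) \<in> insert s X" using fu by simp
  qed
  moreover have "u \<noteq> []" using lu Pk unfolding P_def by auto
  ultimately show ?thesis using wuv by blast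
qed

lemma runs_via_cycles:
  assumes "v \<in> runs_via \<delta> (insert s X) s q"
  shows "v \<in> conc (kstar (runs_via \<delta> X s s)) (runs_via \<delta> X s q)"
  using assms
proof (induction "length v" arbitrary: v rule: less_induct)
  case less
  show ?case
  proof (cases "v \<in> runs_via \<delta> X s q")
    case True
    then show ?thesis using concI[of "[]" "kstar (runs_via \<delta> X s s)" v] by simp
  next
    case False
    then obtain u v' where uv: "v = u @ v'" "u \<noteq> []" "u \<in> runs_via \<delta> X s s"
      "v' \<in> runs_via \<delta> (insert s X) s q"
      using runs_via_split_first[OF less.prems] by blast
    then have "v' \<in> conc (kstar (runs_via \<delta> X s s)) (runs_via \<delta> X s q)"
      using less.hyps by simp
    then obtain y z where yz: "v' = y @ z" "y \<in> kstar (runs_via \<delta> X s s)" "z \<in> runs_via \<delta> X s q"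
      unfolding conc_iff by blast
    have "(u @ y) @ z \<in> conc (kstar (runs_via \<delta> X s s)) (runs_via \<delta> X s q)"
      using concI[OF kstar_cons[OF uv(3) yz(2)] yz(3)] .
    then show ?thesis using uv(1) yz(1) by simp
  qed
qed

lemma kstar_runs_via_cycles:
  "x \<in> kstar (runs_via \<delta> X s s) \<Longrightarrow> x \<in> runs_via \<delta> (insert s X) s s"
proof (induction x rule: kstar_induct)
  case Nil
  then show ?case by (simp add: runs_via_def)
next
  case (App u v)
  have "u \<in> runs_via \<delta> (insert s X) s s" using App.hyps(1) runs_via_mono[of X "insert s X"] by blast
  then show ?case using runs_via_append[OF _ App.IH] by blast
qed

lemma runs_via_insert:
  "runs_via \<delta> (insert s X) p q =
     runs_via \<delta> X p q \<union> conc (runs_via \<delta> X p s) (conc (kstar (runs_via \<delta> X s s)) (runs_via \<delta> X s q))"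
  (is "?lhs = ?direct \<union> conc ?to_s (conc ?cycles ?from_s)")
proof
  show "?lhs \<subseteq> ?direct \<union> conc ?to_s (conc ?cycles ?from_s)"
  proof
    fix w assume w: "w \<in> ?lhs"
    show "w \<in> ?direct \<union> conc ?to_s (conc ?cycles ?from_s)"
    proof (cases "w \<in> ?direct")
      case False
      then obtain u v where uv: "w = u @ v" "u \<in> ?to_s" "v \<in> runs_via \<delta> (insert s X) s q"
        using runs_via_split_first[OF w] by blast
      from uv(3) have "v \<in> conc ?cycles ?from_s" by (rule runs_via_cycles)
      then have "w \<in> conc ?to_s (conc ?cycles ?from_s)" unfolding uv(1) by (rule concI[OF uv(2)])
      then show ?thesis by blast
    qed simp
  qed
  have mono: "runs_via \<delta> X p' q' \<subseteq> runs_via \<delta> (insert s X) p' q'" for p' q'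
    by (rule runs_via_mono) blast
  show "?direct \<union> conc ?to_s (conc ?cycles ?from_s) \<subseteq> ?lhs"
  proof
    fix w assume "w \<in> ?direct \<union> conc ?to_s (conc ?cycles ?from_s)"
    then show "w \<in> ?lhs"
    proof
      assume "w \<in> ?direct"
      then show ?thesis using mono by blast
    next
      assume "w \<in> conc ?to_s (conc ?cycles ?from_s)"
      then obtain u y z where e: "w = u @ (y @ z)" "u \<in> ?to_s" "y \<in> ?cycles" "z \<in> ?from_s"
        unfolding conc_iff by blast
      have u: "u \<in> runs_via \<delta> (insert s X) p s" and z: "z \<in> runs_via \<delta> (insert s X) s q"
        using e(2,4) mono by blast+
      have "y @ z \<in> runs_via \<delta> (insert s X) s q"
        using runs_via_append[OF kstar_runs_via_cycles[OF e(3)] z insertI1] .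
      then show ?thesis unfolding e(1) by (rule runs_via_append[OF u _ insertI1])
    qed
  qed
qed

lemma runs_via_empty_finite: "finite (runs_via \<delta> {} p q :: ('a::finite) list set)"
proof (rule finite_subset)
  show "runs_via \<delta> {} p q \<subseteq> insert [] ((\<lambda>c. [c]) ` UNIV)"
  proof
    fix w assume w: "w \<in> runs_via \<delta> {} p q"
    have "length w \<le> 1"
    proof (rule ccontr)
      assume "\<not> length w \<le> 1"
      then have "0 < (1::nat) \<and> 1 < length w" by simp
      then show False using w unfolding runs_via_def by blast
    qed
    then show "w \<in> insert [] ((\<lambda>c. [c]) ` UNIV)" by (cases w) auto
  qed
qed simp

lemma regular_runs_via: "finite X \<Longrightarrow> regular (runs_via \<delta> X p q :: ('a::finite) list set)"
proof (induction X arbitrary: p q rule: finite_induct)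
  case empty
  then show ?case by (rule regular_finite[OF runs_via_empty_finite])
next
  case (insert s X)
  then show ?case unfolding runs_via_insert by (intro reg_union reg_conc reg_star)
qed

text \<open>An automaton with finitely many reachable states accepts a regular language: it is the
  union, over the reachable final states \<open>q\<close>, of the runs from \<open>q\<^sub>0\<close> to \<open>q\<close> through
  reachable states.\<close>
theorem dfa_regular:
  assumes "finite {foldl \<delta> q0 w | w. True}"
  shows "regular {x :: ('a::finite) list. foldl \<delta> q0 x \<in> F}"
proof -
  define R where "R = {foldl \<delta> q0 w | w. True}"
  have "{x. foldl \<delta> q0 x \<in> F} = (\<Union>q\<in>F \<inter> R. runs_via \<delta> R q0 q)"
  proof
    show "{x. foldl \<delta> q0 x \<in> F} \<subseteq> (\<Union>q\<in>F \<inter> R. runs_via \<delta> R q0 q)"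
    proof
      fix x assume x: "x \<in> {x. foldl \<delta> q0 x \<in> F}"
      have "x \<in> runs_via \<delta> R q0 (foldl \<delta> q0 x)" unfolding runs_via_def R_def by blast
      moreover have "foldl \<delta> q0 x \<in> F \<inter> R" using x unfolding R_def by blast
      ultimately show "x \<in> (\<Union>q\<in>F \<inter> R. runs_via \<delta> R q0 q)" by blast
    qed
    show "(\<Union>q\<in>F \<inter> R. runs_via \<delta> R q0 q) \<subseteq> {x. foldl \<delta> q0 x \<in> F}"
      unfolding runs_via_def by blast
  qed
  moreover have "regular (\<Union>q\<in>F \<inter> R. runs_via \<delta> R q0 q :: 'a list set)"
    using assms unfolding R_def[symmetric] by (intro regular_UN regular_runs_via) (auto intro: finite_subset)
  ultimately show ?thesis by simp
qed

text \<open>The quotients of an automaton language are the languages of the reachable states, so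
  \<open>\<kappa>\<close> is the number of reachable states as soon as reachable states have distinct languages.\<close>
lemma dfa_kappa:
  assumes "inj_on (\<lambda>q. {x. foldl \<delta> q x \<in> F}) R" "R = {foldl \<delta> q0 w | w. True}"
  shows "kappa {x. foldl \<delta> q0 x \<in> F} = card R"
proof -
  have "{lquot {x. foldl \<delta> q0 x \<in> F} w | w. True} = (\<lambda>q. {x. foldl \<delta> q x \<in> F}) ` R"
    unfolding assms(2) by (auto simp: lquot_def)
  then show ?thesis unfolding kappa_def using card_image[OF assms(1)] by simp
qed

lemma dfa_simulation:
  assumes "S q q'" and "foldl \<delta>1 q x \<in> F1"
    and step: "\<And>q q' c. S q q' \<Longrightarrow> S (\<delta>1 q c) (\<delta>2 q' c)"
    and accept: "\<And>q q'. S q q' \<Longrightarrow> q \<in> F1 \<Longrightarrow> q' \<in> F2"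
  shows "foldl \<delta>2 q' x \<in> F2"
  using assms(1,2)
proof (induction x arbitrary: q q')
  case Nil
  then show ?case using accept by simp
next
  case (Cons c x)
  then show ?case using step[OF Cons.prems(1), of c] by simp
qed

lemma dfa_suffix_closed:
  assumes step: "\<And>q q' c. S q q' \<Longrightarrow> S (\<delta> q c) (\<delta> q' c)"
    and accept: "\<And>q q'. S q q' \<Longrightarrow> q \<in> F \<Longrightarrow> q' \<in> F"
    and reach: "\<And>v. S (foldl \<delta> q0 v) q0"
  shows "suffix_closed {x. foldl \<delta> q0 x \<in> F}"
  unfolding suffix_closed_def
proof (intro ballI allI impI)
  fix w u assume "w \<in> {x. foldl \<delta> q0 x \<in> F}" "suffix u w"
  then obtain v where "foldl \<delta> (foldl \<delta> q0 v) u \<in> F" unfolding suffix_def by auto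
  with reach[of v] have "foldl \<delta> q0 u \<in> F" by (rule dfa_simulation) (fact step accept)+
  then show "u \<in> {x. foldl \<delta> q0 x \<in> F}" by simp
qed

text \<open>Let \<open>D\<close> be a dead state and \<open>L\<close> the words whose run from \<open>q\<^sub>0\<close> avoids \<open>D\<close>.  A word
  \<open>y\<close> is described, with respect to \<open>L\<^sup>*\<close>, by the set of live states reached by its star tails
  (the states of all partially read factors of \<open>L\<close>).\<close>
definition star_step :: "('q \<Rightarrow> 'a \<Rightarrow> 'q) \<Rightarrow> 'q \<Rightarrow> 'q \<Rightarrow> 'q set \<Rightarrow> 'a \<Rightarrow> 'q set" where
  "star_step \<delta> D q0 S c =
     (if (\<lambda>q. \<delta> q c) ` S - {D} = {} then {} else insert q0 ((\<lambda>q. \<delta> q c) ` S - {D}))"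

lemma star_tails_Nil: "star_tails L [] = {[]}"
  unfolding star_tails_def by auto

lemma star_tails_snoc:
  "star_tails L (y @ [c]) =
     (\<lambda>v. v @ [c]) ` star_tails L y \<union> (if y @ [c] \<in> kstar L then {[]} else {})"
proof
  show "star_tails L (y @ [c]) \<subseteq> (\<lambda>v. v @ [c]) ` star_tails L y \<union> (if y @ [c] \<in> kstar L then {[]} else {})"
  proof
    fix v' assume "v' \<in> star_tails L (y @ [c])"
    then obtain u where u: "y @ [c] = u @ v'" "u \<in> kstar L" unfolding star_tails_def by blast
    show "v' \<in> (\<lambda>v. v @ [c]) ` star_tails L y \<union> (if y @ [c] \<in> kstar L then {[]} else {})"
    proof (cases v' rule: rev_exhaust)
      case Nil
      then show ?thesis using u by simp
    next
      case (snoc v d)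
      then have "y = u @ v" "d = c" using u(1) by auto
      then have "v \<in> star_tails L y" using u(2) unfolding star_tails_def by blast
      then show ?thesis using snoc \<open>d = c\<close> by blast
    qed
  qed
  show "(\<lambda>v. v @ [c]) ` star_tails L y \<union> (if y @ [c] \<in> kstar L then {[]} else {}) \<subseteq> star_tails L (y @ [c])"
    unfolding star_tails_def by (auto split: if_splits)
qed

lemma kstar_snoc:
  assumes eL: "[] \<in> L"
  shows "y @ [c] \<in> kstar L \<longleftrightarrow> (\<exists>v\<in>star_tails L y. v @ [c] \<in> L)"
proof
  assume "y @ [c] \<in> kstar L"
  then obtain u v y' z where s: "y = u @ v" "u \<in> kstar L" "[c] = y' @ z" "v @ y' \<in> L" "z \<in> kstar L"
    using kstar_split[OF eL, of y "[c]"] by blast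
  show "\<exists>v\<in>star_tails L y. v @ [c] \<in> L"
  proof (cases y')
    case Nil
    then have "z = [c]" "v \<in> L" using s by auto
    then have "[c] \<in> L" using kstar_singleton_word s(5) by simp
    have "y \<in> kstar L" using s(1,2) \<open>v \<in> L\<close> kstar_app kstar_incl by blast
    then show ?thesis using \<open>[c] \<in> L\<close> Nil_in_star_tails by force
  next
    case (Cons d y'')
    then have "y' = [c]" using s(3) by (cases y'') auto
    moreover have "v \<in> star_tails L y" using s unfolding star_tails_def by blast
    ultimately show ?thesis using s(4) by blast
  qed
next
  assume "\<exists>v\<in>star_tails L y. v @ [c] \<in> L"
  then obtain u v where "y = u @ v" "u \<in> kstar L" "v @ [c] \<in> L" unfolding star_tails_def by blast
  then show "y @ [c] \<in> kstar L" using kstar_app[OF _ kstar_incl] by fastforce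
qed

context
  fixes \<delta> :: "'q \<Rightarrow> 'a \<Rightarrow> 'q" and D q0 :: 'q
  assumes dead: "\<And>c. \<delta> D c = D" and live_start: "q0 \<noteq> D"
begin

definition tail_states :: "'a list \<Rightarrow> 'q set" where
  "tail_states y = (\<lambda>v. foldl \<delta> q0 v) ` star_tails {x. foldl \<delta> q0 x \<noteq> D} y - {D}"

lemma kstar_iff_tail_states:
  "y \<in> kstar {x. foldl \<delta> q0 x \<noteq> D} \<longleftrightarrow> tail_states y \<noteq> {}"
  (is "y \<in> kstar ?L \<longleftrightarrow> _")
proof
  assume "y \<in> kstar ?L"
  then have "foldl \<delta> q0 [] \<in> (\<lambda>v. foldl \<delta> q0 v) ` star_tails ?L y"
    using Nil_in_star_tails by blast
  then have "q0 \<in> tail_states y" unfolding tail_states_def using live_start by simp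
  then show "tail_states y \<noteq> {}" by blast
next
  assume "tail_states y \<noteq> {}"
  then obtain v where v: "v \<in> star_tails ?L y" "foldl \<delta> q0 v \<noteq> D"
    unfolding tail_states_def by blast
  then obtain u where "y = u @ v" "u \<in> kstar ?L" unfolding star_tails_def by blast
  then show "y \<in> kstar ?L" using kstar_app[OF _ kstar_incl, of u ?L v] v(2) by simp
qed

lemma tail_states_snoc: "tail_states (y @ [c]) = star_step \<delta> D q0 (tail_states y) c"
proof -
  define L where "L = {x. foldl \<delta> q0 x \<noteq> D}"
  define X where "X = (\<lambda>v. foldl \<delta> q0 v) ` star_tails L y"
  define T where "T = (\<lambda>q. \<delta> q c) ` X - {D}"
  have eL: "[] \<in> L" unfolding L_def using live_start by simp
  have step_T: "star_step \<delta> D q0 (tail_states y) c = (if T = {} then {} else insert q0 T)"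
    unfolding star_step_def tail_states_def L_def[symmetric] X_def[symmetric] T_def
    using dead by (auto intro!: arg_cong2[where f = "\<lambda>A B. if A = {} then {} else insert q0 B"])
  have "y @ [c] \<in> kstar L \<longleftrightarrow> (\<exists>v\<in>star_tails L y. \<delta> (foldl \<delta> q0 v) c \<noteq> D)"
    unfolding kstar_snoc[OF eL] unfolding L_def by simp
  also have "\<dots> \<longleftrightarrow> T \<noteq> {}" unfolding T_def X_def by blast
  finally have in_star: "y @ [c] \<in> kstar L \<longleftrightarrow> T \<noteq> {}" .
  have "tail_states (y @ [c]) = ((\<lambda>q. \<delta> q c) ` X \<union> (if y @ [c] \<in> kstar L then {q0} else {})) - {D}"
    unfolding tail_states_def L_def[symmetric] star_tails_snoc X_def by (auto simp: image_image)
  also have "\<dots> = (if T = {} then {} else insert q0 T)"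
    unfolding in_star T_def using live_start by auto
  finally show ?thesis unfolding step_T .
qed

lemma tail_states_foldl: "tail_states y = foldl (star_step \<delta> D q0) {q0} y"
proof (induction y rule: rev_induct)
  case Nil
  then show ?case unfolding tail_states_def star_tails_Nil using live_start by simp
next
  case (snoc c y)
  then show ?case using tail_states_snoc by simp
qed

theorem kstar_dfa:
  "kstar {x. foldl \<delta> q0 x \<noteq> D} = {x. foldl (star_step \<delta> D q0) {q0} x \<noteq> {}}"
  using kstar_iff_tail_states tail_states_foldl by blast

end

lemma star_step_singleton: "star_step \<delta> D q0 {q} c = (if \<delta> q c = D then {} else {q0, \<delta> q c})"
  unfolding star_step_def by auto

lemma star_step_UN: "star_step \<delta> D q0 S c = (\<Union>q\<in>S. star_step \<delta> D q0 {q} c)"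
proof (cases "\<exists>q\<in>S. \<delta> q c \<noteq> D")
  case True
  then have "(\<lambda>q. \<delta> q c) ` S - {D} \<noteq> {}" by blast
  then show ?thesis unfolding star_step_def star_step_singleton using True by auto
next
  case False
  then show ?thesis unfolding star_step_def star_step_singleton by auto
qed

lemma foldl_star_step_empty [simp]: "foldl (star_step \<delta> D q0) {} x = {}"
  by (induction x) (simp_all add: star_step_def)

lemma foldl_star_step_UN:
  "foldl (star_step \<delta> D q0) S x = (\<Union>q\<in>S. foldl (star_step \<delta> D q0) {q} x)"
proof (induction x arbitrary: S)
  case Nil
  then show ?case by auto
next
  case (Cons c x)
  have "foldl (star_step \<delta> D q0) S (c # x) = foldl (star_step \<delta> D q0) (star_step \<delta> D q0 S c) x"
    by simp
  also have "\<dots> = (\<Union>p\<in>star_step \<delta> D q0 S c. foldl (star_step \<delta> D q0) {p} x)"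
    by (rule Cons.IH)
  also have "\<dots> = (\<Union>q\<in>S. \<Union>p\<in>star_step \<delta> D q0 {q} c. foldl (star_step \<delta> D q0) {p} x)"
    by (subst star_step_UN) (rule UN_UN_flatten)
  also have "\<dots> = (\<Union>q\<in>S. foldl (star_step \<delta> D q0) {q} (c # x))"
  proof (rule SUP_cong[OF refl])
    fix q
    show "(\<Union>p\<in>star_step \<delta> D q0 {q} c. foldl (star_step \<delta> D q0) {p} x) =
        foldl (star_step \<delta> D q0) {q} (c # x)"
      using Cons.IH[of "star_step \<delta> D q0 {q} c"] by simp
  qed
  finally show ?case .
qed

lemma foldl_star_step_insert:
  "foldl (star_step \<delta> D q0) (insert p S) x = foldl (star_step \<delta> D q0) {p} x \<union> foldl (star_step \<delta> D q0) S x"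
  using foldl_star_step_UN[of \<delta> D q0 "insert p S" x] foldl_star_step_UN[of \<delta> D q0 S x] by simp

section \<open>A prefix-closed language reaching the bound \<open>2\<^sup>n\<^sup>-\<^sup>2 + 1\<close>\<close>

text \<open>These moves are
  the effect of the words \<open>b\<close> and \<open>ab\<close> on the states \<open>2, \<dots>, m\<close> of the witness automaton.\<close>
fun survives :: "nat \<Rightarrow> nat \<Rightarrow> bool list \<Rightarrow> bool" where
  "survives k i [] = True"
| "survives k i (True # bs) = survives k ((i + 1) mod k) bs"
| "survives k i (False # bs) = (i \<noteq> k - 1 \<and> survives k ((i + 2) mod k) bs)"

text \<open>One kill followed by \<open>k - 1\<close> rotations: kills position \<open>k - 1\<close> and shifts by one.\<close>
definition kill_move :: "nat \<Rightarrow> bool list" where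
  "kill_move k = False # replicate (k - 1) True"

text \<open>Rotating position \<open>j\<close> to \<open>0\<close> and then killing \<open>k - 1\<close> positions in turn isolates \<open>j\<close>.\<close>
definition isolate :: "nat \<Rightarrow> nat \<Rightarrow> bool list" where
  "isolate k j = replicate (k - j) True @ concat (replicate (k - 1) (kill_move k))"

lemma survives_rotations: "0 < k \<Longrightarrow> i < k \<Longrightarrow> survives k i (replicate r True @ bs) = survives k ((i + r) mod k) bs"
proof (induction r arbitrary: i)
  case 0 then show ?case by simp
next
  case (Suc r)
  have "survives k i (replicate (Suc r) True @ bs) = survives k ((i + 1) mod k) (replicate r True @ bs)" by simp
  also have "\<dots> = survives k (((i + 1) mod k + r) mod k) bs" using Suc by simp
  also have "((i + 1) mod k + r) mod k = (i + Suc r) mod k" by (simp add: mod_add_left_eq)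
  finally show ?case .
qed

lemma survives_kill_move: "2 \<le> k \<Longrightarrow> i < k \<Longrightarrow> survives k i (kill_move k @ bs) = (i \<noteq> k - 1 \<and> survives k ((i + 1) mod k) bs)"
proof -
  assume k: "2 \<le> k" and i: "i < k"
  have "survives k i (kill_move k @ bs) = (i \<noteq> k - 1 \<and> survives k ((i + 2) mod k) (replicate (k - 1) True @ bs))"
    by (simp add: kill_move_def)
  also have "survives k ((i + 2) mod k) (replicate (k - 1) True @ bs) = survives k (((i + 2) mod k + (k - 1)) mod k) bs"
    using k by (intro survives_rotations) auto
  also have "((i + 2) mod k + (k - 1)) mod k = (i + 1) mod k"
  proof -
    have "((i + 2) mod k + (k - 1)) mod k = (i + 2 + (k - 1)) mod k" by (simp add: mod_add_left_eq)
    also have "i + 2 + (k - 1) = (i + 1) + k" using k by simp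
    also have "((i + 1) + k) mod k = (i + 1) mod k" by (rule mod_add_self2)
    finally show ?thesis .
  qed
  finally show ?thesis .
qed

lemma survives_kill_moves: "2 \<le> k \<Longrightarrow> i < k \<Longrightarrow> survives k i (concat (replicate n (kill_move k))) = (\<forall>t<n. (i + t) mod k \<noteq> k - 1)"
proof (induction n arbitrary: i)
  case 0 then show ?case by simp
next
  case (Suc n)
  have "survives k i (concat (replicate (Suc n) (kill_move k))) = (i \<noteq> k - 1 \<and> survives k ((i + 1) mod k) (concat (replicate n (kill_move k))))"
    using survives_kill_move[OF Suc.prems] by simp
  also have "survives k ((i + 1) mod k) (concat (replicate n (kill_move k))) = (\<forall>t<n. ((i + 1) mod k + t) mod k \<noteq> k - 1)"
    using Suc.IH[of "(i + 1) mod k"] Suc.prems by simp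
  also have "\<dots> = (\<forall>t<n. (i + Suc t) mod k \<noteq> k - 1)" by (simp add: mod_add_left_eq)
  also have "(i \<noteq> k - 1 \<and> (\<forall>t<n. (i + Suc t) mod k \<noteq> k - 1)) = (\<forall>t<Suc n. (i + t) mod k \<noteq> k - 1)"
    using Suc.prems by (auto simp: less_Suc_eq_0_disj)
  finally show ?case .
qed

lemma survives_kill_round: "1 \<le> k \<Longrightarrow> i < k \<Longrightarrow> survives k i (concat (replicate (k - 1) (kill_move k))) = (i = 0)"
proof (cases "k = 1")
  case True
  assume "i < k" then show ?thesis using True by simp
next
  case False
  assume k: "1 \<le> k" and i: "i < k"
  then have k2: "2 \<le> k" using False by simp
  show ?thesis unfolding survives_kill_moves[OF k2 i]
  proof
    assume h: "\<forall>t<k - 1. (i + t) mod k \<noteq> k - 1"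
    show "i = 0"
    proof (rule ccontr)
      assume "i \<noteq> 0"
      then have "k - 1 - i < k - 1" "(i + (k - 1 - i)) mod k = k - 1" using i by auto
      then show False using h by blast
    qed
  next
    assume "i = 0" then show "\<forall>t<k - 1. (i + t) mod k \<noteq> k - 1" by simp
  qed
qed

lemma survives_isolate: "1 \<le> k \<Longrightarrow> i < k \<Longrightarrow> j < k \<Longrightarrow> survives k i (isolate k j) = (i = j)"
proof -
  assume k: "1 \<le> k" and i: "i < k" and j: "j < k"
  have "survives k i (isolate k j) = survives k ((i + (k - j)) mod k) (concat (replicate (k - 1) (kill_move k)))"
    unfolding isolate_def using k i by (intro survives_rotations) auto
  also have "\<dots> = ((i + (k - j)) mod k = 0)" using k by (intro survives_kill_round) auto
  also have "\<dots> = (i = j)"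
  proof (cases "j \<le> i")
    case True
    then have e: "i + (k - j) = (i - j) + k" using j by simp
    have "(i + (k - j)) mod k = ((i - j) + k) mod k" by (simp only: e)
    also have "\<dots> = (i - j) mod k" by (rule mod_add_self2)
    also have "\<dots> = i - j" using i by simp
    finally have "(i + (k - j)) mod k = i - j" .
    then show ?thesis using True by auto
  next
    case False
    then have "(i + (k - j)) mod k = i + (k - j)" using j by simp
    then show ?thesis using False j by auto
  qed
  finally show ?thesis .
qed

text \<open>For \<open>m = n - 2\<close>, the automaton has states \<open>0, \<dots>, m\<close> and a dead state \<open>m + 1\<close>.  The
  letter \<open>a\<close> moves \<open>q \<mapsto> q + 1\<close> (and \<open>m\<close> to the dead state); the letter \<open>b\<close> kills \<open>0\<close> and \<open>1\<close>
  and rotates the cycle \<open>2 \<rightarrow> 3 \<rightarrow> \<dots> \<rightarrow> m \<rightarrow> 2\<close> (for \<open>m = 1\<close> it fixes \<open>1\<close>); other letters are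
  fatal.\<close>
locale prefix_witness =
  fixes m :: nat and a b :: "'a::finite"
  assumes ab: "a \<noteq> b"
begin

definition pstep :: "nat \<Rightarrow> 'a \<Rightarrow> nat" where
  "pstep q c =
    (if m < q then Suc m
     else if c = a then (if q < m then Suc q else Suc m)
     else if c = b then (if q = 0 then Suc m else if q = 1 then (if m = 1 then 1 else Suc m)
                         else if q < m then Suc q else 2)
     else Suc m)"

definition PL :: "'a list set" where
  "PL = {x. foldl pstep 0 x \<noteq> Suc m}"

definition rotate :: "nat \<Rightarrow> nat \<Rightarrow> nat" where
  "rotate s p = 2 + (p - 2 + s) mod (m - 1)"

lemma pstep_dead [simp]: "pstep (Suc m) c = Suc m"
  unfolding pstep_def by simp

lemma foldl_pstep_dead [simp]: "foldl pstep (Suc m) x = Suc m"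
  by (induction x) simp_all

lemma pstep_le: "pstep q c \<le> Suc m"
  unfolding pstep_def by auto

lemma foldl_pstep_le: "q \<le> Suc m \<Longrightarrow> foldl pstep q x \<le> Suc m"
  by (induction x arbitrary: q) (auto simp: pstep_le)

lemma pstep_a: "q \<le> m \<Longrightarrow> pstep q a = (if q < m then Suc q else Suc m)"
  unfolding pstep_def by simp

lemma pstep_b_0: "pstep 0 b = Suc m"
  unfolding pstep_def using ab by simp

lemma pstep_b_1: "2 \<le> m \<Longrightarrow> pstep 1 b = Suc m"
  unfolding pstep_def using ab by auto

lemma pstep_b_rotate: "2 \<le> p \<Longrightarrow> p \<le> m \<Longrightarrow> pstep p b = rotate 1 p"
  unfolding pstep_def rotate_def using ab by (auto simp: mod_Suc)

lemma rotate_range: "2 \<le> m \<Longrightarrow> rotate s p \<in> {2..m}"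
proof -
  assume m: "2 \<le> m"
  have "(p - 2 + s) mod (m - 1) < m - 1" using m by simp
  then show ?thesis unfolding rotate_def atLeastAtMost_iff using m by linarith
qed

lemma foldl_pstep_as:
  "q \<le> m \<Longrightarrow> foldl pstep q (replicate j a) = (if q + j \<le> m then q + j else Suc m)"
proof (induction j arbitrary: q)
  case 0
  then show ?case by simp
next
  case (Suc j)
  then show ?case using Suc.IH[of "Suc q"] by (cases "q < m") (simp_all add: pstep_a)
qed

lemma PL_prefix_closed: "prefix_closed PL"
  unfolding prefix_closed_def PL_def prefix_def by auto

lemma PL_reachable: "{foldl pstep 0 w | w. True} = {..Suc m}"
proof
  show "{foldl pstep 0 w | w. True} \<subseteq> {..Suc m}"
    using foldl_pstep_le[of 0] by auto
  show "{..Suc m} \<subseteq> {foldl pstep 0 w | w. True}"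
  proof
    fix q assume "q \<in> {..Suc m}"
    then have "q = foldl pstep 0 (replicate q a)"
      using foldl_pstep_as[of 0 q] foldl_pstep_as[of 0 "Suc m"] by (cases "q \<le> m") auto
    then show "q \<in> {foldl pstep 0 w | w. True}" by blast
  qed
qed

lemma PL_dfa: "PL = {x. foldl pstep 0 x \<in> - {Suc m}}"
  unfolding PL_def by simp

lemma PL_regular: "regular PL"
  unfolding PL_dfa by (rule dfa_regular) (unfold PL_reachable, simp)

text \<open>The states are distinguished by the words \<open>a\<^sup>j\<close>: from \<open>q \<le> m\<close>, \<open>a\<^sup>j\<close> is accepted iff
  \<open>q + j \<le> m\<close>.\<close>
lemma PL_kappa: "kappa PL = m + 2"
proof -
  have accepts: "replicate j a \<in> {x. foldl pstep p x \<in> - {Suc m}} \<longleftrightarrow> p + j \<le> m"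
    if "p \<le> Suc m" for p j
    using that foldl_pstep_as[of p j] by (cases "p = Suc m") auto
  have "inj_on (\<lambda>q. {x. foldl pstep q x \<in> - {Suc m}}) {..Suc m}"
  proof (rule inj_onI)
    fix q q' assume q: "q \<in> {..Suc m}" and q': "q' \<in> {..Suc m}"
      and eq: "{x. foldl pstep q x \<in> - {Suc m}} = {x. foldl pstep q' x \<in> - {Suc m}}"
    then have "q + j \<le> m \<longleftrightarrow> q' + j \<le> m" for j using accepts[of q j] accepts[of q' j] by auto
    from this[of "m - q"] this[of "m - q'"] q q' show "q = q'" by auto
  qed
  then have "kappa PL = card {..Suc m}"
    unfolding PL_dfa by (rule dfa_kappa) (rule PL_reachable[symmetric])
  then show ?thesis by simp
qed

definition pstar :: "nat set \<Rightarrow> 'a \<Rightarrow> nat set" where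
  "pstar = star_step pstep (Suc m) 0"

text \<open>\<open>alive q x\<close>: some run started in \<open>q\<close> (with restarts at \<open>0\<close>) survives \<open>x\<close>, i.e.\ \<open>x\<close> is
  in the quotient of \<open>PL\<^sup>*\<close> contributed by a pending factor in state \<open>q\<close>.\<close>
definition alive :: "nat \<Rightarrow> 'a list \<Rightarrow> bool" where
  "alive q x \<longleftrightarrow> foldl pstar {q} x \<noteq> {}"

lemma kstar_PL: "kstar PL = {x. foldl pstar {0} x \<in> - {{}}}"
  unfolding PL_def pstar_def using kstar_dfa[of pstep "Suc m" 0] by simp

lemma star_lang_iff_alive: "x \<in> {x. foldl pstar S x \<in> - {{}}} \<longleftrightarrow> (\<exists>q\<in>S. alive q x)"
  using foldl_star_step_UN[of pstep "Suc m" 0 S x] unfolding alive_def pstar_def by simp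

lemma alive_Nil [simp]: "alive q []"
  unfolding alive_def by simp

lemma alive_Cons: "alive q (c # x) \<longleftrightarrow> pstep q c \<noteq> Suc m \<and> (alive 0 x \<or> alive (pstep q c) x)"
proof (cases "pstep q c = Suc m")
  case True
  then show ?thesis unfolding alive_def pstar_def by (simp add: star_step_singleton)
next
  case False
  then have "foldl pstar {q} (c # x) = foldl pstar {0} x \<union> foldl pstar {pstep q c} x"
    unfolding pstar_def using foldl_star_step_insert[of pstep "Suc m" 0 0 "{pstep q c}" x]
    by (simp add: star_step_singleton)
  then show ?thesis unfolding alive_def using False by simp
qed

lemma not_alive_if_dead: "pstep q c = Suc m \<Longrightarrow> \<not> alive q (c # x)"
  by (simp add: alive_Cons)

fun enc :: "bool list \<Rightarrow> 'a list" where
  "enc [] = []"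
| "enc (True # bs) = b # enc bs"
| "enc (False # bs) = a # b # enc bs"

text \<open>A restart at \<open>0\<close> never survives a nonempty encoded word, since \<open>b\<close> kills \<open>0\<close> and \<open>1\<close>.\<close>
lemma alive_0_enc:
  assumes m: "2 \<le> m"
  shows "alive 0 (enc bs) \<longleftrightarrow> bs = []"
proof (cases bs rule: enc.cases)
  case (3 bs')
  have "\<not> alive 0 (b # enc bs')" "\<not> alive 1 (b # enc bs')"
    using not_alive_if_dead pstep_b_0 pstep_b_1[OF m] by blast+
  moreover have "pstep 0 a = 1" using m pstep_a[of 0] by simp
  ultimately show ?thesis using 3 by (simp add: alive_Cons)
qed (simp_all add: not_alive_if_dead pstep_b_0)

lemma alive_b_enc:
  assumes "2 \<le> m" "2 \<le> p" "p \<le> m"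
  shows "alive p (b # enc bs) \<longleftrightarrow> alive (rotate 1 p) (enc bs)"
  using assms rotate_range[of 1 p] alive_0_enc[of bs]
  by (cases "bs = []") (auto simp: alive_Cons pstep_b_rotate)

lemma alive_enc:
  assumes "2 \<le> m" "2 \<le> p" "p \<le> m"
  shows "alive p (enc bs) \<longleftrightarrow> survives (m - 1) (p - 2) bs"
  using assms(2,3)
proof (induction bs arbitrary: p rule: enc.induct)
  case 1
  then show ?case by simp
next
  case (2 bs)
  have "rotate 1 p - 2 = (p - 2 + 1) mod (m - 1)" unfolding rotate_def by simp
  moreover have "2 \<le> rotate 1 p" "rotate 1 p \<le> m" using rotate_range[OF assms(1)] by auto
  ultimately show ?case using "2.IH" "2.prems" assms(1) by (simp add: alive_b_enc)
next
  case (3 bs)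
  note p = "3.prems"
  show ?case
  proof (cases "p < m")
    case True
    have "Suc p - 2 + 1 = p - 2 + 2" using p by linarith
    then have "rotate 1 (Suc p) - 2 = (p - 2 + 2) mod (m - 1)"
      unfolding rotate_def by (metis add_diff_cancel_left')
    moreover have "2 \<le> rotate 1 (Suc p)" "rotate 1 (Suc p) \<le> m" using rotate_range[OF assms(1)] by auto
    moreover have "p - 2 \<noteq> m - 1 - 1" using True p by simp
    moreover have "\<not> alive 0 (b # enc bs)" by (rule not_alive_if_dead[OF pstep_b_0])
    moreover have "alive (Suc p) (b # enc bs) \<longleftrightarrow> alive (rotate 1 (Suc p)) (enc bs)"
      using alive_b_enc[OF assms(1)] p True by simp
    ultimately show ?thesis using "3.IH" True p by (simp add: alive_Cons pstep_a pstep_b_0)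
  next
    case False
    then have "p = m" using p by simp
    then show ?thesis using assms(1) not_alive_if_dead[of m a] by (simp add: pstep_a numeral_2_eq_2)
  qed
qed

definition sep_word :: "nat \<Rightarrow> 'a list" where
  "sep_word j =
    (if m = 1 then [b]
     else if j = 1 then a # enc (isolate (m - 1) 0)
     else enc (isolate (m - 1) (j - 2)))"

lemma alive_enc_isolate:
  assumes m: "2 \<le> m" and j: "2 \<le> j" "j \<le> m" and q: "q \<le> m"
  shows "alive q (enc (isolate (m - 1) (j - 2))) \<longleftrightarrow> q = j"
proof -
  obtain r where r: "isolate (m - 1) (j - 2) = True # r"
    using j m unfolding isolate_def by (cases "m - 1 - (j - 2)") auto
  consider "q = 0" | "q = 1" | "2 \<le> q" by linarith
  then show ?thesis
  proof cases
    case 1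
    then show ?thesis using r j not_alive_if_dead[OF pstep_b_0] by simp
  next
    case 2
    then show ?thesis using r j not_alive_if_dead[OF pstep_b_1[OF m]] by simp
  next
    case 3
    have "survives (m - 1) (q - 2) (isolate (m - 1) (j - 2)) \<longleftrightarrow> q - 2 = j - 2"
      using m j q 3 by (intro survives_isolate) auto
    then show ?thesis using alive_enc[OF m 3 q] 3 j by auto
  qed
qed

lemma alive_sep_word:
  assumes j: "1 \<le> j" "j \<le> m" and q: "q \<le> m"
  shows "alive q (sep_word j) \<longleftrightarrow> q = j"
proof (cases "m = 1")
  case True
  then have "j = 1" using j by simp
  have "sep_word j = [b]" unfolding sep_word_def using True by simp
  moreover have "alive q [b] \<longleftrightarrow> pstep q b \<noteq> Suc m" by (simp add: alive_Cons)
  moreover have "pstep 1 b \<noteq> Suc m" using True ab unfolding pstep_def by simp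
  moreover have "q = 0 \<or> q = 1" using q True by auto
  ultimately show ?thesis using pstep_b_0 \<open>j = 1\<close> by auto
next
  case False
  then have m: "2 \<le> m" using j by simp
  show ?thesis
  proof (cases "j = 1")
    case False
    then show ?thesis using alive_enc_isolate[OF m _ j(2) q] j m by (simp add: sep_word_def)
  next
    case True
    have X: "alive p (enc (isolate (m - 1) 0)) \<longleftrightarrow> p = 2" if "p \<le> m" for p
      using alive_enc_isolate[OF m _ m that] by simp
    show ?thesis
    proof (cases "q < m")
      case True
      then show ?thesis using X[of 0] X[of "Suc q"] m \<open>j = 1\<close>
        by (simp add: sep_word_def alive_Cons pstep_a)
    next
      case False
      then show ?thesis using q m \<open>j = 1\<close> not_alive_if_dead[of q a]
        by (simp add: sep_word_def pstep_a)
    qed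
  qed
qed

text \<open>Their languages are pairwise distinct, separated by \<open>\<epsilon>\<close> and the words \<open>sep_word j\<close>.\<close>
definition star_states :: "nat set set" where
  "star_states = insert {} (insert 0 ` Pow {1..m})"

lemma star_lang_sep_word:
  assumes "X \<subseteq> {..m}" "1 \<le> j" "j \<le> m"
  shows "sep_word j \<in> {x. foldl pstar X x \<in> - {{}}} \<longleftrightarrow> j \<in> X"
proof -
  have "(\<exists>q\<in>X. alive q (sep_word j)) \<longleftrightarrow> (\<exists>q\<in>X. q = j)"
    using assms alive_sep_word[of j] by (intro bex_cong) auto
  then show ?thesis unfolding star_lang_iff_alive by simp
qed

lemma star_lang_inj: "inj_on (\<lambda>S. {x. foldl pstar S x \<in> - {{}}}) star_states"
proof (rule inj_onI)
  fix S S' assume S: "S \<in> star_states" and S': "S' \<in> star_states"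
    and eq: "{x. foldl pstar S x \<in> - {{}}} = {x. foldl pstar S' x \<in> - {{}}}"
  then have "[] \<in> {x. foldl pstar S x \<in> - {{}}} \<longleftrightarrow> [] \<in> {x. foldl pstar S' x \<in> - {{}}}" by simp
  then have empty: "S = {} \<longleftrightarrow> S' = {}" by simp
  show "S = S'"
  proof (cases "S = {}")
    case False
    then obtain T T' where T: "S = insert 0 T" "T \<subseteq> {1..m}" "S' = insert 0 T'" "T' \<subseteq> {1..m}"
      using S S' empty unfolding star_states_def by auto
    have "j \<in> S \<longleftrightarrow> j \<in> S'" if "1 \<le> j" "j \<le> m" for j
    proof -
      have "S \<subseteq> {..m}" "S' \<subseteq> {..m}" using T by auto
      then have "j \<in> S \<longleftrightarrow> sep_word j \<in> {x. foldl pstar S x \<in> - {{}}}"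
        "j \<in> S' \<longleftrightarrow> sep_word j \<in> {x. foldl pstar S' x \<in> - {{}}}"
        using star_lang_sep_word[OF _ that] by simp_all
      then show ?thesis unfolding eq by simp
    qed
    then show ?thesis using T by auto
  qed (use empty in simp)
qed

end

context prefix_witness
begin

lemma pstar_in_star_states: "pstar S c \<in> star_states"
proof (cases "(\<lambda>q. pstep q c) ` S - {Suc m} = {}")
  case True
  then show ?thesis unfolding pstar_def star_step_def star_states_def by simp
next
  case False
  define X where "X = (\<lambda>q. pstep q c) ` S - {Suc m}"
  have "X \<subseteq> {..m}" unfolding X_def using pstep_le by (auto simp: le_Suc_eq)
  then have "X - {0} \<in> Pow {1..m}" by auto
  moreover have "pstar S c = insert 0 (X - {0})"
    unfolding pstar_def star_step_def X_def[symmetric] using False X_def by simp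
  ultimately show ?thesis unfolding star_states_def by blast
qed

definition reachable :: "nat set \<Rightarrow> bool" where
  "reachable S \<longleftrightarrow> (\<exists>w. foldl pstar {0} w = S)"

lemma reachable_start: "reachable {0}"
  unfolding reachable_def by (intro exI[of _ "[]"]) simp

lemma reachable_step: "reachable S \<Longrightarrow> reachable (pstar S c)"
  unfolding reachable_def by (metis foldl_Cons foldl_Nil foldl_append)

lemma pstar_a:
  assumes m: "1 \<le> m" and T: "T \<subseteq> {1..m}"
  shows "pstar (insert 0 T) a = insert 0 (insert 1 (Suc ` (T - {m})))"
proof -
  have "(\<lambda>q. pstep q a) ` insert 0 T - {Suc m} = insert 1 (Suc ` (T - {m}))"
  proof (rule set_eqI, rule iffI)
    fix x assume "x \<in> (\<lambda>q. pstep q a) ` insert 0 T - {Suc m}"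
    then obtain q where q: "q \<in> insert 0 T" "x = pstep q a" "x \<noteq> Suc m" by blast
    then have "q \<le> m" using T by auto
    then have "q < m" "x = Suc q" using q pstep_a by (auto split: if_splits)
    then show "x \<in> insert 1 (Suc ` (T - {m}))" using q(1) by auto
  next
    fix x assume x: "x \<in> insert 1 (Suc ` (T - {m}))"
    show "x \<in> (\<lambda>q. pstep q a) ` insert 0 T - {Suc m}"
    proof (cases "x = 1")
      case True
      have "pstep 0 a = 1" using pstep_a[of 0] m by simp
      then show ?thesis using True m by force
    next
      case False
      then obtain q where "q \<in> T" "q \<noteq> m" "x = Suc q" using x by blast
      moreover have "q < m" using T \<open>q \<in> T\<close> \<open>q \<noteq> m\<close> by fastforce
      ultimately show ?thesis using pstep_a[of q] by force
    qed
  qed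
  then show ?thesis unfolding pstar_def star_step_def by simp
qed

lemma reachable_a:
  assumes "1 \<le> m" "Z \<subseteq> {1..<m}" "reachable (insert 0 Z)"
  shows "reachable (insert 0 (insert 1 (Suc ` Z)))"
proof -
  have "Z \<subseteq> {1..m}" "Z - {m} = Z" using assms(2) by auto
  then show ?thesis using reachable_step[OF assms(3), of a] pstar_a[OF assms(1)] by simp
qed

lemma pstar_b:
  assumes m: "2 \<le> m" and T: "T \<subseteq> {1..m}" and ne: "T - {1} \<noteq> {}"
  shows "pstar (insert 0 T) b = insert 0 (rotate 1 ` (T - {1}))"
proof -
  have "(\<lambda>q. pstep q b) ` insert 0 T - {Suc m} = rotate 1 ` (T - {1})"
  proof (rule set_eqI, rule iffI)
    fix x assume "x \<in> (\<lambda>q. pstep q b) ` insert 0 T - {Suc m}"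
    then obtain q where q: "q \<in> insert 0 T" "x = pstep q b" "x \<noteq> Suc m" by blast
    have "q \<noteq> 0" using q(2,3) pstep_b_0 by metis
    moreover have "q \<noteq> 1" using q(2,3) pstep_b_1[OF m] by metis
    ultimately have "q \<in> T - {1}" "2 \<le> q" "q \<le> m" using q(1) T by auto
    then show "x \<in> rotate 1 ` (T - {1})" using q(2) pstep_b_rotate by auto
  next
    fix x assume "x \<in> rotate 1 ` (T - {1})"
    then obtain q where q: "q \<in> T" "q \<noteq> 1" "x = rotate 1 q" by blast
    then have "pstep q b = x" "x \<noteq> Suc m" using T pstep_b_rotate rotate_range[OF m, of 1 q] by auto
    then show "x \<in> (\<lambda>q. pstep q b) ` insert 0 T - {Suc m}" using q(1) by force
  qed
  then show ?thesis unfolding pstar_def star_step_def using ne by simp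
qed

lemma rotate_add: "rotate t (rotate s p) = rotate (s + t) p"
  unfolding rotate_def by (simp add: mod_add_left_eq add.assoc)

lemma rotate_inverse:
  assumes m: "2 \<le> m" and p: "2 \<le> p" "p \<le> m"
  shows "rotate ((m - 2) * s) (rotate s p) = p"
proof -
  have "m - 1 = Suc (m - 2)" using m by simp
  then have "rotate ((m - 2) * s) (rotate s p) = rotate ((m - 1) * s) p" by (simp add: rotate_add)
  also have "(p - 2 + (m - 1) * s) mod (m - 1) = (p - 2) mod (m - 1)" by simp
  then have "rotate ((m - 1) * s) p = 2 + (p - 2) mod (m - 1)" unfolding rotate_def by presburger
  also have "(p - 2) mod (m - 1) = p - 2" using p m by simp
  finally show ?thesis using p by simp
qed

text \<open>Repeated \<open>b\<close> rotates a nonempty set on the cycle; since rotations are invertible,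
  reachability is invariant under rotation.\<close>
lemma reachable_rotate:
  assumes m: "2 \<le> m" and T: "T \<subseteq> {2..m}" "T \<noteq> {}" and R: "reachable (insert 0 T)"
  shows "reachable (insert 0 (rotate s ` T))"
proof (induction s)
  case 0
  have "rotate 0 p = p" if "p \<in> T" for p
  proof -
    have "2 \<le> p" "p \<le> m" using that T(1) by auto
    then have "2 \<le> p" "p - 2 < m - 1" using m by linarith+
    then show ?thesis unfolding rotate_def by simp
  qed
  then have "rotate 0 ` T = T" by simp
  then show ?case using R by simp
next
  case (Suc s)
  have sub: "rotate s ` T \<subseteq> {2..m}" using rotate_range[OF m] by blast
  then have "pstar (insert 0 (rotate s ` T)) b = insert 0 (rotate 1 ` rotate s ` T)"
    using pstar_b[OF m, of "rotate s ` T"] T(2) by force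
  also have "rotate 1 ` rotate s ` T = rotate (Suc s) ` T" by (simp add: image_image rotate_add)
  finally show ?case using reachable_step[OF Suc.IH, of b] by simp
qed

lemma reachable_rotate_iff:
  assumes m: "2 \<le> m" and T: "T \<subseteq> {2..m}" "T \<noteq> {}"
  shows "reachable (insert 0 (rotate s ` T)) \<longleftrightarrow> reachable (insert 0 T)"
proof
  assume R: "reachable (insert 0 (rotate s ` T))"
  have "rotate s ` T \<subseteq> {2..m}" "rotate s ` T \<noteq> {}" using rotate_range[OF m] T(2) by auto
  from reachable_rotate[OF m this R, of "(m - 2) * s"]
  have "reachable (insert 0 ((\<lambda>p. rotate ((m - 2) * s) (rotate s p)) ` T))" by (simp add: image_image)
  moreover have "rotate ((m - 2) * s) (rotate s p) = p" if "p \<in> T" for p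
    using that T(1) rotate_inverse[OF m] by auto
  ultimately show "reachable (insert 0 T)" by simp
qed (rule reachable_rotate[OF assms])

lemma shift_down:
  assumes "T \<subseteq> {3..m}"
  obtains Y where "Y \<subseteq> {2..<m}" "T = Suc ` Y" "card Y = card T"
proof
  let ?Y = "(\<lambda>q. q - 1) ` T"
  show "?Y \<subseteq> {2..<m}" using assms by force
  show "T = Suc ` ?Y" using assms by (force simp: image_image intro: image_eqI)
  have "inj_on (\<lambda>q. q - 1) T"
  proof (rule inj_onI)
    fix x y assume "x \<in> T" "y \<in> T" "x - 1 = y - 1"
    moreover have "3 \<le> x" "3 \<le> y" using assms \<open>x \<in> T\<close> \<open>y \<in> T\<close> by auto
    ultimately show "x = y" by arith
  qed
  then show "card ?Y = card T" by (rule card_image)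
qed

text \<open>Induction on the size of \<open>T \<subseteq> {2..m}\<close>: both \<open>{0} \<union> T\<close> and \<open>{0, 1} \<union> T\<close> are
  reachable.\<close>
definition reachable_of_size :: "nat \<Rightarrow> bool" where
  "reachable_of_size k \<longleftrightarrow>
     (\<forall>T. T \<subseteq> {2..m} \<and> card T = k \<longrightarrow> reachable (insert 0 T) \<and> reachable (insert 0 (insert 1 T)))"

lemma reachable_with_2:
  assumes IH: "reachable_of_size k" and T: "T \<subseteq> {2..m}" "2 \<in> T" "card T = Suc k"
  shows "reachable (insert 0 (insert 1 T))"
proof -
  have "T - {2} \<subseteq> {3..m}" using T by auto
  then obtain Y where Y: "Y \<subseteq> {2..<m}" "T - {2} = Suc ` Y" "card Y = card (T - {2})"
    by (rule shift_down)
  have "finite T" using T(1) finite_subset by blast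
  then have "card Y = k" using Y(3) T by simp
  moreover have "Y \<subseteq> {2..m}" using Y(1) by auto
  ultimately have "reachable (insert 0 (insert 1 Y))" using IH unfolding reachable_of_size_def by blast
  moreover have "2 \<le> m" using T by auto
  ultimately have "reachable (insert 0 (insert 1 (Suc ` insert 1 Y)))"
    by (intro reachable_a) (use Y in auto)
  moreover have "Suc ` insert 1 Y = T" using Y(2) T(2) by (auto simp: numeral_2_eq_2)
  ultimately show ?thesis by simp
qed

text \<open>To reach \<open>{0} \<union> T\<close>, rotate \<open>T\<close> so that it contains \<open>2\<close>, reach it with \<open>1\<close> added,
  apply \<open>b\<close> (which removes \<open>1\<close> and rotates once more), and undo the rotation.\<close>
lemma reachable_nonempty:
  assumes IH: "reachable_of_size k" and T: "T \<subseteq> {2..m}" "card T = Suc k"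
  shows "reachable (insert 0 T)"
proof -
  obtain t where t: "t \<in> T" using T(2) by fastforce
  then have m: "2 \<le> m" and t2: "2 \<le> t" "t \<le> m" using T(1) by auto
  define s where "s = (m - 1) - (t - 2)"
  have "rotate s t = 2" unfolding rotate_def s_def using t2 m by simp
  define T2 where "T2 = rotate s ` T"
  have T2: "T2 \<subseteq> {2..m}" "2 \<in> T2"
    unfolding T2_def using rotate_range[OF m] image_eqI[of 2 "rotate s", OF _ t] \<open>rotate s t = 2\<close> by auto
  have "inj_on (rotate s) T"
  proof (rule inj_on_inverseI)
    fix p assume "p \<in> T"
    then show "rotate ((m - 2) * s) (rotate s p) = p" using T(1) rotate_inverse[OF m] by auto
  qed
  then have "card T2 = Suc k" unfolding T2_def using T(2) by (simp add: card_image)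
  then have "reachable (insert 0 (insert 1 T2))" using reachable_with_2[OF IH T2] by blast
  then have "reachable (pstar (insert 0 (insert 1 T2)) b)" by (rule reachable_step)
  also have "pstar (insert 0 (insert 1 T2)) b = insert 0 (rotate 1 ` (insert 1 T2 - {1}))"
    using T2 m by (intro pstar_b) auto
  also have "insert 1 T2 - {1} = T2" using T2(1) by auto
  also have "rotate 1 ` T2 = rotate (Suc s) ` T" unfolding T2_def by (simp add: image_image rotate_add)
  finally show ?thesis using reachable_rotate_iff[OF m T(1)] T(2) by fastforce
qed

lemma reachable_of_size_all: "1 \<le> m \<Longrightarrow> reachable_of_size k"
proof (induction k)
  case 0
  have "pstar {0} a = {0, 1}" using pstar_a[OF 0] by simp
  then have "reachable {0, 1}" using reachable_step[OF reachable_start, of a] by simp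
  then show ?case unfolding reachable_of_size_def using reachable_start
    by (auto dest: finite_subset[OF _ finite_atLeastAtMost])
next
  case (Suc k)
  have "reachable (insert 0 (insert 1 T))" if T: "T \<subseteq> {2..m}" "card T = Suc k" for T
  proof (cases "2 \<in> T")
    case True
    then show ?thesis using reachable_with_2[OF Suc.IH[OF Suc.prems]] T by blast
  next
    case False
    have "T \<subseteq> {3..m}"
    proof
      fix x assume "x \<in> T"
      then have "x \<in> {2..m}" "x \<noteq> 2" using T(1) False by blast+
      then show "x \<in> {3..m}" by auto
    qed
    then obtain Y where Y: "Y \<subseteq> {2..<m}" "T = Suc ` Y" "card Y = card T" by (rule shift_down)
    moreover have "Y \<subseteq> {2..m}" "card Y = Suc k" using Y T(2) by auto
    ultimately have "reachable (insert 0 Y)"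
      using reachable_nonempty[OF Suc.IH[OF Suc.prems], of Y] by blast
    then have "reachable (insert 0 (insert 1 (Suc ` Y)))" using Y Suc.prems by (intro reachable_a) auto
    then show ?thesis using Y by simp
  qed
  then show ?case unfolding reachable_of_size_def
    using reachable_nonempty[OF Suc.IH[OF Suc.prems]] by blast
qed

lemma reachable_star_states:
  assumes "S \<in> star_states"
  shows "reachable S"
proof -
  have "reachable {}"
    using reachable_step[OF reachable_start, of b] pstep_b_0 by (simp add: pstar_def star_step_def)
  moreover have "reachable (insert 0 T)" if "T \<subseteq> {1..m}" for T
  proof (cases "m = 0")
    case True
    then show ?thesis using that reachable_start by auto
  next
    case False
    then have all: "reachable_of_size (card (T - {1}))" by (intro reachable_of_size_all) simp
    have "T - {1} \<subseteq> {2..m}" using that by auto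
    then have "reachable (insert 0 (T - {1})) \<and> reachable (insert 0 (insert 1 (T - {1})))"
      using all unfolding reachable_of_size_def by blast
    then show ?thesis by (cases "1 \<in> T") (simp_all add: insert_absorb)
  qed
  ultimately show ?thesis using assms unfolding star_states_def by auto
qed

lemma star_reachable: "{foldl pstar {0} w | w. True} = star_states"
proof
  have "foldl pstar S w \<in> star_states" if "S \<in> star_states" for S w
    using that pstar_in_star_states by (induction w arbitrary: S) auto
  moreover have "{0} \<in> star_states" unfolding star_states_def by auto
  ultimately show "{foldl pstar {0} w | w. True} \<subseteq> star_states" by blast
  show "star_states \<subseteq> {foldl pstar {0} w | w. True}"
    using reachable_star_states unfolding reachable_def by blast
qed

lemma card_star_states: "card star_states = 2 ^ m + 1"
proof -
  have "inj_on (insert (0::nat)) (Pow {1..m})"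
    by (rule inj_onI) (metis Diff_insert_absorb PowD atLeastAtMost_iff not_one_le_zero subsetD)
  then have "card (insert 0 ` Pow {1..m}) = 2 ^ m" by (simp add: card_image card_Pow)
  moreover have "{} \<notin> insert 0 ` Pow {1..m}" by auto
  ultimately show ?thesis unfolding star_states_def by simp
qed

theorem kappa_kstar_PL: "kappa (kstar PL) = 2 ^ m + 1"
proof -
  have "kappa (kstar PL) = card star_states" unfolding kstar_PL
    by (rule dfa_kappa[OF star_lang_inj]) (rule star_reachable[symmetric])
  then show ?thesis using card_star_states by simp
qed

lemma prefix_witness_exists:
  "\<exists>L :: 'a list set. regular L \<and> prefix_closed L \<and> kappa L = m + 2 \<and> kappa (kstar L) = 2 ^ m + 1"
  using PL_regular PL_prefix_closed PL_kappa kappa_kstar_PL by blast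

end

section \<open>The remaining witnesses\<close>

lemma subseq_set: "subseq u x \<Longrightarrow> set u \<subseteq> set x"
  using list_emb_set[of "(=)" u x] by blast

lemma subword_closed_imp_suffix_closed: "subword_closed L \<Longrightarrow> suffix_closed L"
  unfolding subword_closed_def suffix_closed_def by (meson suffix_imp_subseq)

locale two_letters =
  fixes a b :: "'a::finite"
  assumes ab: "a \<noteq> b"
begin

definition astep :: "nat \<Rightarrow> nat \<Rightarrow> 'a \<Rightarrow> nat" where
  "astep k q c = (if c = a \<and> q < k then Suc q else Suc k)"

definition A_upto :: "nat \<Rightarrow> 'a list set" where
  "A_upto k = {x. foldl (astep k) 0 x \<in> {..k}}"

lemma foldl_astep: "q \<le> Suc k \<Longrightarrow> foldl (astep k) q x =
   (if q \<le> k \<and> set x \<subseteq> {a} \<and> q + length x \<le> k then q + length x else Suc k)"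
proof (induction x arbitrary: q)
  case Nil then show ?case by auto
next
  case (Cons c x)
  show ?case
  proof (cases "c = a \<and> q < k")
    case True
    then have "astep k q c = Suc q" unfolding astep_def by simp
    then have "foldl (astep k) q (c # x) = foldl (astep k) (Suc q) x" by simp
    also have "\<dots> = (if Suc q \<le> k \<and> set x \<subseteq> {a} \<and> Suc q + length x \<le> k then Suc q + length x else Suc k)"
      using Cons.IH[of "Suc q"] True by simp
    also have "\<dots> = (if q \<le> k \<and> set (c # x) \<subseteq> {a} \<and> q + length (c # x) \<le> k then q + length (c # x) else Suc k)"
      using True by simp
    finally show ?thesis .
  next
    case False
    then have d: "astep k q c = Suc k" unfolding astep_def by auto
    have "foldl (astep k) (Suc k) x = Suc k" using Cons.IH[of "Suc k"] by simp
    then have l: "foldl (astep k) q (c # x) = Suc k" using d by simp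
    have "\<not> (q \<le> k \<and> set (c # x) \<subseteq> {a} \<and> q + length (c # x) \<le> k)" using False by auto
    then show ?thesis unfolding l by simp
  qed
qed

lemma A_upto_iff: "x \<in> A_upto k \<longleftrightarrow> set x \<subseteq> {a} \<and> length x \<le> k"
proof (cases "set x \<subseteq> {a} \<and> length x \<le> k")
  case True
  then have "foldl (astep k) 0 x = length x" using foldl_astep[of 0 k x] by simp
  then show ?thesis unfolding A_upto_def using True by simp
next
  case False
  then have "foldl (astep k) 0 x = Suc k" using foldl_astep[of 0 k x] by auto
  then show ?thesis unfolding A_upto_def using False by simp
qed

lemma A_upto_reachable: "{foldl (astep k) 0 w | w. True} = {..Suc k}"
proof
  show "{foldl (astep k) 0 w | w. True} \<subseteq> {..Suc k}"
  proof
    fix q assume "q \<in> {foldl (astep k) 0 w | w. True}"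
    then obtain w where "q = foldl (astep k) 0 w" by blast
    then show "q \<in> {..Suc k}" using foldl_astep[of 0 k w] by (auto split: if_splits)
  qed
  show "{..Suc k} \<subseteq> {foldl (astep k) 0 w | w. True}"
  proof
    fix q assume q: "q \<in> {..Suc k}"
    have "q = foldl (astep k) 0 (replicate q a)" using foldl_astep[of 0 k "replicate q a"] q
      by (cases "q \<le> k") auto
    then show "q \<in> {foldl (astep k) 0 w | w. True}" by blast
  qed
qed

lemma A_upto_regular: "regular (A_upto k)"
  unfolding A_upto_def by (rule dfa_regular) (unfold A_upto_reachable, simp)

lemma A_upto_kappa: "kappa (A_upto k) = k + 2"
proof -
  have mem: "replicate j a \<in> {x. foldl (astep k) p x \<in> {..k}} \<longleftrightarrow> p + j \<le> k" if "p \<le> Suc k" for p j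
    using foldl_astep[OF that, of "replicate j a"] by auto
  have inj: "inj_on (\<lambda>q. {x. foldl (astep k) q x \<in> {..k}}) {..Suc k}"
  proof (rule inj_onI)
    fix q q' assume q: "q \<in> {..Suc k}" and q': "q' \<in> {..Suc k}"
      and eq: "{x. foldl (astep k) q x \<in> {..k}} = {x. foldl (astep k) q' x \<in> {..k}}"
    have e: "p + j \<le> k \<longleftrightarrow> p' + j \<le> k" if "p = q \<and> p' = q'" for p p' j
      using eq mem[of q j] mem[of q' j] q q' that by auto
    show "q = q'" using e[of q q' "k - q"] e[of q q' "k - q'"] q q' by auto
  qed
  have "kappa (A_upto k) = card {..Suc k}" unfolding A_upto_def
    by (rule dfa_kappa[OF inj]) (rule A_upto_reachable[symmetric])
  then show ?thesis by simp
qed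

lemma A_upto_subword_closed: "subword_closed (A_upto k)"
  unfolding subword_closed_def
proof (intro ballI allI impI)
  fix w u assume "w \<in> A_upto k" "subseq u w"
  then have "set w \<subseteq> {a}" "length w \<le> k" "set u \<subseteq> set w" "length u \<le> length w"
    unfolding A_upto_iff using subseq_set list_emb_length by blast+
  then show "u \<in> A_upto k" unfolding A_upto_iff by simp
qed

text \<open>For \<open>k \<ge> 1\<close> the star is \<open>a\<^sup>*\<close>, which has two quotients.\<close>
definition A_star :: "'a list set" where "A_star = {x. set x \<subseteq> {a}}"

lemma kstar_A_upto: "1 \<le> k \<Longrightarrow> kstar (A_upto k) = A_star"
proof
  show "kstar (A_upto k) \<subseteq> A_star"
  proof
    fix x assume "x \<in> kstar (A_upto k)" then show "x \<in> A_star"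
    proof (induction x rule: kstar_induct)
      case Nil then show ?case by (simp add: A_star_def)
    next
      case (App u v)
      then have "set u \<subseteq> {a}" "set v \<subseteq> {a}" unfolding A_upto_iff A_star_def by blast+
      then show ?case unfolding A_star_def by simp
    qed
  qed
next
  assume k: "1 \<le> k"
  show "A_star \<subseteq> kstar (A_upto k)"
  proof
    fix x assume "x \<in> A_star" then show "x \<in> kstar (A_upto k)"
    proof (induction x)
      case (Cons c x)
      then have "c = a" "x \<in> A_star" unfolding A_star_def by auto
      then have "[c] \<in> A_upto k" "x \<in> kstar (A_upto k)" using k Cons.IH unfolding A_upto_iff by auto
      then show ?case using kstar_cons[of "[c]" "A_upto k" x] by simp
    qed simp
  qed
qed

definition a_only :: "bool \<Rightarrow> 'a \<Rightarrow> bool" where "a_only q c = (q \<and> c = a)"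

lemma foldl_a_only: "foldl a_only q x = (q \<and> set x \<subseteq> {a})"
proof (induction x arbitrary: q)
  case Nil then show ?case by simp
next
  case (Cons c x)
  have "foldl a_only q (c # x) = foldl a_only (q \<and> c = a) x" by (simp add: a_only_def)
  also have "\<dots> = ((q \<and> c = a) \<and> set x \<subseteq> {a})" by (rule Cons.IH)
  finally show ?case by auto
qed

lemma kappa_A_star: "kappa A_star = 2"
proof -
  have eq: "A_star = {x. foldl a_only True x \<in> {True}}" unfolding A_star_def foldl_a_only by simp
  have R: "{foldl a_only True w | w. True} = UNIV"
  proof -
    have "foldl a_only True [] = True" "foldl a_only True [b] = False" using ab by (auto simp: a_only_def)
    then have "True \<in> {foldl a_only True w | w. True}" "False \<in> {foldl a_only True w | w. True}" by blast+
    then show ?thesis using UNIV_bool by auto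
  qed
  have inj: "inj_on (\<lambda>q. {x. foldl a_only q x \<in> {True}}) UNIV"
  proof (rule inj_onI)
    fix q q' assume "{x. foldl a_only q x \<in> {True}} = {x. foldl a_only q' x \<in> {True}}"
    then have "[] \<in> {x. foldl a_only q x \<in> {True}} \<longleftrightarrow> [] \<in> {x. foldl a_only q' x \<in> {True}}" by simp
    then show "q = q'" by simp
  qed
  have "kappa A_star = card (UNIV :: bool set)" unfolding eq
    by (rule dfa_kappa[OF inj]) (rule R[symmetric])
  then show ?thesis by simp
qed

lemma kappa_kstar_A_upto: "kappa (kstar (A_upto k)) = 2"
proof (cases "k = 0")
  case True
  then have "kstar (A_upto k) = A_upto k" by (intro kstar_eq_self) (auto simp: A_upto_iff)
  then show ?thesis using A_upto_kappa True by simp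
next
  case False
  then show ?thesis using kstar_A_upto kappa_A_star by simp
qed

text \<open>From the accepting state \<open>0\<close>, \<open>a\<close> is a self-loop and \<open>b\<close> starts a countdown \<open>m, m - 1, \<dots>\<close> driven
  by \<open>a\<close>; \<open>m + 1\<close> is dead.  The language \<open>KL m\<close> is closed under concatenation, and suffix-closed
  because the initial state \<open>0\<close> is the "smallest" state.\<close>
definition kstep :: "nat \<Rightarrow> nat \<Rightarrow> 'a \<Rightarrow> nat" where
  "kstep m q c = (if m < q then Suc m else if c = a then q - 1
     else if c = b then (if q = 0 then m else Suc m) else Suc m)"

definition KL :: "nat \<Rightarrow> 'a list set" where "KL m = {x. foldl (kstep m) 0 x \<in> {0}}"

lemma kstep_dead[simp]: "kstep m (Suc m) c = Suc m" unfolding kstep_def by simp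

lemma foldl_kstep_dead[simp]: "foldl (kstep m) (Suc m) x = Suc m"
  by (induction x) simp_all

lemma kstep_le: "kstep m q c \<le> Suc m" unfolding kstep_def by auto

lemma foldl_kstep_le: "q \<le> Suc m \<Longrightarrow> foldl (kstep m) q x \<le> Suc m"
  by (induction x arbitrary: q) (simp_all add: kstep_le)

lemma kstep_a: "q \<le> m \<Longrightarrow> kstep m q a = q - 1" unfolding kstep_def by simp

lemma kstep_b_0: "kstep m 0 b = m" unfolding kstep_def using ab by simp

lemma kstep_b_pos: "0 < q \<Longrightarrow> kstep m q b = Suc m" unfolding kstep_def using ab by simp

lemma foldl_kstep_as: "q \<le> m \<Longrightarrow> foldl (kstep m) q (replicate j a) = q - j"
proof (induction j arbitrary: q)
  case 0 then show ?case by simp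
next
  case (Suc j)
  have "foldl (kstep m) q (replicate (Suc j) a) = foldl (kstep m) (q - 1) (replicate j a)"
    using kstep_a[OF Suc.prems] by simp
  also have "\<dots> = q - 1 - j" using Suc.IH[of "q - 1"] Suc.prems by simp
  finally show ?case by simp
qed

lemma KL_reachable: "1 \<le> m \<Longrightarrow> {foldl (kstep m) 0 w | w. True} = {..Suc m}"
proof
  show "{foldl (kstep m) 0 w | w. True} \<subseteq> {..Suc m}"
  proof
    fix q assume "q \<in> {foldl (kstep m) 0 w | w. True}"
    then obtain w where "q = foldl (kstep m) 0 w" by blast
    then show "q \<in> {..Suc m}" using foldl_kstep_le[of 0 m w] by simp
  qed
next
  assume m1: "1 \<le> m"
  show "{..Suc m} \<subseteq> {foldl (kstep m) 0 w | w. True}"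
  proof
    fix q assume q: "q \<in> {..Suc m}"
    show "q \<in> {foldl (kstep m) 0 w | w. True}"
    proof (cases "q = Suc m")
      case True
      have "foldl (kstep m) 0 [b, b] = Suc m" using kstep_b_0 kstep_b_pos m1 by simp
      then have "q = foldl (kstep m) 0 [b, b]" using True by simp
      then show ?thesis by blast
    next
      case False
      then have "q \<le> m" using q by simp
      have "foldl (kstep m) 0 (b # replicate (m - q) a) = foldl (kstep m) m (replicate (m - q) a)"
        using kstep_b_0 by simp
      also have "\<dots> = q" using foldl_kstep_as[of m m "m - q"] \<open>q \<le> m\<close> by simp
      finally have e: "foldl (kstep m) 0 (b # replicate (m - q) a) = q" .
      show ?thesis by (intro CollectI exI[of _ "b # replicate (m - q) a"]) (simp only: e simp_thms)
    qed
  qed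
qed

lemma KL_regular: "1 \<le> m \<Longrightarrow> regular (KL m)"
  unfolding KL_def by (rule dfa_regular) (unfold KL_reachable, simp)

lemma KL_kappa:
  assumes m: "1 \<le> m"
  shows "kappa (KL m) = m + 2"
proof -
  have accepts: "replicate j a \<in> {x. foldl (kstep m) p x \<in> {0}} \<longleftrightarrow> p \<le> m \<and> p \<le> j"
    if "p \<le> Suc m" for p j
    using that foldl_kstep_as[of p m j] by (cases "p = Suc m") auto
  have "inj_on (\<lambda>q. {x. foldl (kstep m) q x \<in> {0}}) {..Suc m}"
  proof (rule inj_onI)
    fix q q' assume q: "q \<in> {..Suc m}" and q': "q' \<in> {..Suc m}"
      and eq: "{x. foldl (kstep m) q x \<in> {0}} = {x. foldl (kstep m) q' x \<in> {0}}"
    then have "q \<le> m \<and> q \<le> j \<longleftrightarrow> q' \<le> m \<and> q' \<le> j" for j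
      using accepts[of q j] accepts[of q' j] by auto
    from this[of q] this[of q'] this[of m] q q' show "q = q'" by auto
  qed
  then have "kappa (KL m) = card {..Suc m}"
    unfolding KL_def by (rule dfa_kappa) (rule KL_reachable[OF m, symmetric])
  then show ?thesis by simp
qed

lemma KL_append: "u \<in> KL m \<Longrightarrow> v \<in> KL m \<Longrightarrow> u @ v \<in> KL m"
  unfolding KL_def by simp

lemma kstar_KL: "kstar (KL m) = KL m"
  by (rule kstar_eq_self) (auto simp: KL_def)

lemma kstep_mono: "q \<le> q' \<Longrightarrow> q' \<le> Suc m \<Longrightarrow> kstep m q c \<le> kstep m q' c"
  unfolding kstep_def by auto

lemma KL_suffix_closed: "suffix_closed (KL m)"
  unfolding KL_def
proof (rule dfa_suffix_closed[where S = "\<lambda>q q'. q' \<le> q \<and> q \<le> Suc m"])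
  show "q' \<le> q \<and> q \<le> Suc m \<Longrightarrow> kstep m q' c \<le> kstep m q c \<and> kstep m q c \<le> Suc m" for q q' c
    using kstep_mono kstep_le by blast
  show "foldl (kstep m) 0 v \<ge> 0 \<and> foldl (kstep m) 0 v \<le> Suc m" for v
    using foldl_kstep_le[of 0 m v] by simp
qed auto

text \<open>A new initial state \<open>m + 2\<close> stays put on \<open>a\<close> and enters the countdown of \<open>KL m\<close> on \<open>b\<close>;
  the initial state and \<open>0\<close> accept.\<close>
definition fstep :: "nat \<Rightarrow> nat \<Rightarrow> 'a \<Rightarrow> nat" where
  "fstep m q c = (if q = Suc (Suc m) then (if c = a then Suc (Suc m) else if c = b then m else Suc m)
     else if m < q then Suc m else if c = a then q - 1 else Suc m)"

definition FL :: "nat \<Rightarrow> 'a list set" where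
  "FL m = {x. foldl (fstep m) (Suc (Suc m)) x \<in> {0, Suc (Suc m)}}"

lemma fstep_dead[simp]: "fstep m (Suc m) c = Suc m" unfolding fstep_def by simp

lemma foldl_fstep_dead[simp]: "foldl (fstep m) (Suc m) x = Suc m"
  by (induction x) simp_all

lemma fstep_le: "fstep m q c \<le> Suc (Suc m)" unfolding fstep_def by auto

lemma foldl_fstep_le: "q \<le> Suc (Suc m) \<Longrightarrow> foldl (fstep m) q x \<le> Suc (Suc m)"
  by (induction x arbitrary: q) (simp_all add: fstep_le)

lemma fstep_a: "q \<le> m \<Longrightarrow> fstep m q a = q - 1" unfolding fstep_def by simp

lemma fstep_not_a: "q \<le> Suc m \<Longrightarrow> c \<noteq> a \<Longrightarrow> fstep m q c = Suc m" unfolding fstep_def by simp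

lemma fstep_init_a: "fstep m (Suc (Suc m)) a = Suc (Suc m)" unfolding fstep_def by simp

lemma fstep_init_b: "fstep m (Suc (Suc m)) b = m" unfolding fstep_def using ab by simp

lemma foldl_fstep_as: "q \<le> m \<Longrightarrow> foldl (fstep m) q (replicate j a) = q - j"
proof (induction j arbitrary: q)
  case 0 then show ?case by simp
next
  case (Suc j)
  have "foldl (fstep m) q (replicate (Suc j) a) = foldl (fstep m) (q - 1) (replicate j a)"
    using fstep_a[OF Suc.prems] by simp
  also have "\<dots> = q - 1 - j" using Suc.IH[of "q - 1"] Suc.prems by simp
  finally show ?case by simp
qed

lemma foldl_fstep_init_as: "foldl (fstep m) (Suc (Suc m)) (replicate j a) = Suc (Suc m)"
  by (induction j) (simp_all add: fstep_init_a)

lemma foldl_fstep_b_as: "foldl (fstep m) (Suc (Suc m)) (b # replicate j a) = m - j"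
  using fstep_init_b foldl_fstep_as[of m m j] by simp

lemma FL_reachable: "{foldl (fstep m) (Suc (Suc m)) w | w. True} = {..Suc (Suc m)}"
proof
  show "{foldl (fstep m) (Suc (Suc m)) w | w. True} \<subseteq> {..Suc (Suc m)}"
  proof
    fix q assume "q \<in> {foldl (fstep m) (Suc (Suc m)) w | w. True}"
    then obtain w where "q = foldl (fstep m) (Suc (Suc m)) w" by blast
    then show "q \<in> {..Suc (Suc m)}" using foldl_fstep_le[of "Suc (Suc m)" m w] by simp
  qed
  show "{..Suc (Suc m)} \<subseteq> {foldl (fstep m) (Suc (Suc m)) w | w. True}"
  proof
    fix q assume q: "q \<in> {..Suc (Suc m)}"
    have "\<exists>w. foldl (fstep m) (Suc (Suc m)) w = q"
    proof -
      consider "q \<le> m" | "q = Suc m" | "q = Suc (Suc m)" using q by fastforce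
      then show ?thesis
      proof cases
        case 1
        then have "foldl (fstep m) (Suc (Suc m)) (b # replicate (m - q) a) = q" using foldl_fstep_b_as by simp
        then show ?thesis by blast
      next
        case 2
        have "foldl (fstep m) (Suc (Suc m)) [b, b] = Suc m" using fstep_init_b fstep_not_a[of m m b] ab by simp
        then show ?thesis using 2 by blast
      next
        case 3
        have "foldl (fstep m) (Suc (Suc m)) [] = Suc (Suc m)" by simp
        then show ?thesis using 3 by blast
      qed
    qed
    then obtain w where "foldl (fstep m) (Suc (Suc m)) w = q" by blast
    then show "q \<in> {foldl (fstep m) (Suc (Suc m)) w | w. True}"
      by (intro CollectI exI[of _ w]) simp
  qed
qed

lemma FL_regular: "regular (FL m)"
  unfolding FL_def by (rule dfa_regular) (unfold FL_reachable, simp)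

text \<open>States are distinguished by \<open>a\<^sup>j\<close> (accepted from \<open>q \<le> m\<close> iff \<open>q \<le> j\<close>, and from
  the initial state) and by \<open>b a\<^sup>m\<close> (accepted only from the initial state).\<close>
lemma FL_kappa: "kappa (FL m) = m + 3"
proof -
  let ?lang = "\<lambda>p. {x. foldl (fstep m) p x \<in> {0, Suc (Suc m)}}"
  have accepts_b: "b # replicate m a \<in> ?lang p \<longleftrightarrow> p = Suc (Suc m)" if "p \<le> Suc (Suc m)" for p
    using that ab foldl_fstep_b_as[of m m] fstep_not_a[of p m b]
    by (cases "p = Suc (Suc m)") auto
  have accepts_a: "replicate j a \<in> ?lang p \<longleftrightarrow> p = Suc (Suc m) \<or> (p \<le> m \<and> p \<le> j)"
    if "p \<le> Suc (Suc m)" for p j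
    using that foldl_fstep_as[of p m j] foldl_fstep_init_as[of m j]
    by (cases "p \<le> m"; cases "p = Suc (Suc m)") (auto simp: le_Suc_eq)
  have "inj_on ?lang {..Suc (Suc m)}"
  proof (rule inj_onI)
    fix p p' assume p: "p \<in> {..Suc (Suc m)}" and p': "p' \<in> {..Suc (Suc m)}"
      and eq: "?lang p = ?lang p'"
    then have init: "p = Suc (Suc m) \<longleftrightarrow> p' = Suc (Suc m)"
      using accepts_b[of p] accepts_b[of p'] by auto
    have "p \<le> m \<and> p \<le> j \<longleftrightarrow> p' \<le> m \<and> p' \<le> j" if "p \<noteq> Suc (Suc m)" for j
    proof -
      have "replicate j a \<in> ?lang p \<longleftrightarrow> replicate j a \<in> ?lang p'" using eq by simp
      then show ?thesis using accepts_a[of p j] accepts_a[of p' j] p p' init that by simp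
    qed
    from this[of p] this[of p'] this[of m] p p' init show "p = p'" by (cases "p = Suc (Suc m)") auto
  qed
  then have "kappa (FL m) = card {..Suc (Suc m)}"
    unfolding FL_def by (rule dfa_kappa) (rule FL_reachable[symmetric])
  then show ?thesis by simp
qed

definition FL_sim :: "nat \<Rightarrow> nat \<Rightarrow> nat \<Rightarrow> bool" where
  "FL_sim m q q' = (q' = Suc (Suc m) \<or> q = Suc m \<or> (q \<le> m \<and> q' \<le> m \<and> q' \<le> q))"

lemma FL_sim_step:
  "FL_sim m q q' \<Longrightarrow> q \<le> Suc (Suc m) \<Longrightarrow> FL_sim m (fstep m q c) (fstep m q' c)"
  unfolding FL_sim_def fstep_def using ab by auto

lemma FL_suffix_closed: "suffix_closed (FL m)"
  unfolding FL_def
proof (rule dfa_suffix_closed[where S = "\<lambda>q q'. q \<le> Suc (Suc m) \<and> FL_sim m q q'"])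
  show "q \<le> Suc (Suc m) \<and> FL_sim m q q' \<Longrightarrow>
      fstep m q c \<le> Suc (Suc m) \<and> FL_sim m (fstep m q c) (fstep m q' c)" for q q' c
    using FL_sim_step fstep_le by blast
  show "q \<le> Suc (Suc m) \<and> FL_sim m q q' \<Longrightarrow> q \<in> {0, Suc (Suc m)} \<Longrightarrow> q' \<in> {0, Suc (Suc m)}"
    for q q' unfolding FL_sim_def by auto
  show "foldl (fstep m) (Suc (Suc m)) v \<le> Suc (Suc m) \<and> FL_sim m (foldl (fstep m) (Suc (Suc m)) v) (Suc (Suc m))"
    for v using foldl_fstep_le[of "Suc (Suc m)" m v] unfolding FL_sim_def by simp
qed

text \<open>\<open>FL m \<subseteq> KL m\<close>: the countdowns of the two automata run in parallel.\<close>
definition FL_KL_sim :: "nat \<Rightarrow> nat \<Rightarrow> nat \<Rightarrow> bool" where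
  "FL_KL_sim m p q = ((p = Suc (Suc m) \<and> q = 0) \<or> (p \<le> m \<and> q = p) \<or> p = Suc m)"

lemma FL_KL_sim_step: "FL_KL_sim m p q \<Longrightarrow> FL_KL_sim m (fstep m p c) (kstep m q c)"
  unfolding FL_KL_sim_def fstep_def kstep_def using ab by auto

lemma FL_KL_sim_init: "FL_KL_sim m (Suc (Suc m)) 0"
  unfolding FL_KL_sim_def by simp

lemma FL_subset_KL: "FL m \<subseteq> KL m"
proof
  fix x assume "x \<in> FL m"
  then have "foldl (fstep m) (Suc (Suc m)) x \<in> {0, Suc (Suc m)}" unfolding FL_def by simp
  with FL_KL_sim_init have "foldl (kstep m) 0 x \<in> {0}"
    by (rule dfa_simulation) (erule FL_KL_sim_step, auto simp: FL_KL_sim_def)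
  then show "x \<in> KL m" unfolding KL_def by simp
qed

lemma foldl_kstep_Nil_decomp: "q \<le> m \<Longrightarrow> foldl (kstep m) q x = 0 \<Longrightarrow> \<exists>z. x = replicate q a @ z \<and> foldl (kstep m) 0 z = 0"
proof (induction q arbitrary: x)
  case 0 then show ?case by simp
next
  case (Suc q)
  show ?case
  proof (cases x)
    case Nil then show ?thesis using Suc.prems by simp
  next
    case (Cons c x')
    show ?thesis
    proof (cases "c = a")
      case True
      then have "foldl (kstep m) q x' = 0" using Suc.prems Cons kstep_a[of "Suc q" m] by simp
      moreover have "q \<le> m" using Suc.prems by simp
      ultimately obtain z where "x' = replicate q a @ z" "foldl (kstep m) 0 z = 0" using Suc.IH by blast
      then show ?thesis using Cons True by simp
    next
      case False
      then have "kstep m (Suc q) c = Suc m" unfolding kstep_def using Suc.prems by auto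
      then show ?thesis using Suc.prems Cons by simp
    qed
  qed
qed

lemma KL_subset_kstar_FL: "1 \<le> m \<Longrightarrow> x \<in> KL m \<Longrightarrow> x \<in> kstar (FL m)"
proof (induction "length x" arbitrary: x rule: less_induct)
  case less
  note m1 = less.prems(1)
  show ?case
  proof (cases x)
    case Nil then show ?thesis by simp
  next
    case (Cons c x')
    have fx: "foldl (kstep m) 0 x = 0" using less.prems unfolding KL_def by simp
    consider "c = a" | "c = b" | "c \<noteq> a" "c \<noteq> b" by blast
    then show ?thesis
    proof cases
      case 1
      then have "x' \<in> KL m" using fx Cons kstep_a[of 0 m] unfolding KL_def by simp
      then have "x' \<in> kstar (FL m)" using less.hyps Cons m1 by simp
      moreover have "[a] \<in> FL m" unfolding FL_def using fstep_init_a by simp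
      ultimately show ?thesis using kstar_cons[of "[a]" "FL m" x'] Cons 1 by simp
    next
      case 2
      then have "foldl (kstep m) m x' = 0" using fx Cons kstep_b_0 by simp
      then obtain z where z: "x' = replicate m a @ z" "foldl (kstep m) 0 z = 0" using foldl_kstep_Nil_decomp by blast
      then have "z \<in> KL m" unfolding KL_def by simp
      moreover have "length z < length x" using z Cons by simp
      ultimately have "z \<in> kstar (FL m)" using less.hyps m1 by blast
      moreover have "b # replicate m a \<in> FL m" unfolding FL_def using foldl_fstep_b_as[of m m] by simp
      ultimately show ?thesis using kstar_cons[of "b # replicate m a" "FL m" z] Cons 2 z by simp
    next
      case 3
      then have "kstep m 0 c = Suc m" unfolding kstep_def by simp
      then show ?thesis using fx Cons by simp
    qed
  qed
qed

lemma kstar_FL: "1 \<le> m \<Longrightarrow> kstar (FL m) = KL m"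
proof
  show "kstar (FL m) \<subseteq> KL m" using kstar_mono[OF FL_subset_KL] kstar_KL by simp
  assume "1 \<le> m"
  then show "KL m \<subseteq> kstar (FL m)" using KL_subset_kstar_FL by blast
qed

lemma FL_ne_kstar: "1 \<le> m \<Longrightarrow> FL m \<noteq> kstar (FL m)"
proof
  assume m1: "1 \<le> m" and eq: "FL m = kstar (FL m)"
  define w where "w = b # replicate m a"
  have wK: "w \<in> KL m" unfolding KL_def w_def using kstep_b_0 foldl_kstep_as[of m m m] by simp
  have "w @ w \<in> KL m" using KL_append[OF wK wK] .
  then have "w @ w \<in> FL m" using eq kstar_FL[OF m1] by simp
  moreover have "foldl (fstep m) (Suc (Suc m)) (w @ w) = Suc m"
  proof -
    have "foldl (fstep m) (Suc (Suc m)) w = 0" unfolding w_def using foldl_fstep_b_as[of m m] by simp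
    moreover have "fstep m 0 b = Suc m" using fstep_not_a[of 0 m b] ab by simp
    ultimately show ?thesis unfolding w_def by simp
  qed
  ultimately show False unfolding FL_def by simp
qed

lemma subword_witness:
  assumes "n \<ge> 2"
  shows "\<exists>L :: 'a list set. regular L \<and> subword_closed L \<and> kappa L = n \<and> kappa (kstar L) = 2"
  using assms A_upto_regular A_upto_subword_closed A_upto_kappa kappa_kstar_A_upto
  by (intro exI[of _ "A_upto (n - 2)"]) simp

lemma suffix_star_witness:
  assumes "n \<ge> 3"
  shows "\<exists>L :: 'a list set. regular L \<and> suffix_closed L \<and> kappa L = n \<and>
           L = kstar L \<and> kappa (kstar L) = n"
  using assms KL_regular KL_suffix_closed KL_kappa kstar_KL
  by (intro exI[of _ "KL (n - 2)"]) simp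

text \<open>For \<open>n = 3\<close> the language \<open>{\<epsilon>, a}\<close> serves; for \<open>n \<ge> 4\<close>, \<open>FL (n - 3)\<close>.\<close>
lemma suffix_nonstar_witness:
  assumes "n \<ge> 3"
  shows "\<exists>L :: 'a list set. regular L \<and> suffix_closed L \<and> kappa L = n \<and>
           L \<noteq> kstar L \<and> kappa (kstar L) = n - 1"
proof (cases "n = 3")
  case True
  have "[a, a] \<in> kstar (A_upto 1)" "[a, a] \<notin> A_upto 1"
    using kstar_A_upto[of 1] unfolding A_star_def A_upto_iff by simp_all
  then have "A_upto 1 \<noteq> kstar (A_upto 1)" by blast
  then show ?thesis
    using True A_upto_regular A_upto_kappa kappa_kstar_A_upto
      subword_closed_imp_suffix_closed[OF A_upto_subword_closed]
    by (intro exI[of _ "A_upto 1"]) simp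
next
  case False
  then have m: "1 \<le> n - 3" using assms by simp
  have "kappa (FL (n - 3)) = n" using FL_kappa[of "n - 3"] assms False by simp
  moreover have "kappa (kstar (FL (n - 3))) = n - 1" using kstar_FL[OF m] KL_kappa[OF m] assms by simp
  ultimately show ?thesis using FL_regular FL_suffix_closed FL_ne_kstar[OF m]
    by (intro exI[of _ "FL (n - 3)"]) simp
qed

end

theorem kstar_upper_bounds:
  fixes L :: "'a list set"
  shows "(kappa L = 1 \<and> closed_lang L \<longrightarrow> kappa (kstar L) \<le> 2) \<and>
         (\<forall>n. kappa L = n \<and> n \<ge> 2 \<longrightarrow>
            (prefix_closed L \<longrightarrow> kappa (kstar L) \<le> 2 ^ (n - 2) + 1) \<and>
            (suffix_closed L \<longrightarrow>
               (L = kstar L \<longrightarrow> kappa (kstar L) \<le> n) \<and>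
               (L \<noteq> kstar L \<longrightarrow> kappa (kstar L) \<le> n - 1)) \<and>
            (factor_closed L \<or> subword_closed L \<longrightarrow> kappa (kstar L) \<le> 2))"
proof (intro conjI allI impI)
  show "kappa L = 1 \<and> closed_lang L \<Longrightarrow> kappa (kstar L) \<le> 2"
    using kappa_one_kappa_kstar by blast
  fix n assume n: "kappa L = n \<and> n \<ge> 2"
  show "prefix_closed L \<Longrightarrow> kappa (kstar L) \<le> 2 ^ (n - 2) + 1"
    using prefix_closed_kappa_kstar n by blast
  show "suffix_closed L \<Longrightarrow> L = kstar L \<Longrightarrow> kappa (kstar L) \<le> n"
    using suffix_closed_kappa_kstar(1) n by blast
  show "suffix_closed L \<Longrightarrow> L \<noteq> kstar L \<Longrightarrow> kappa (kstar L) \<le> n - 1"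
    using suffix_closed_kappa_kstar(2) n by blast
  show "factor_closed L \<or> subword_closed L \<Longrightarrow> kappa (kstar L) \<le> 2"
    using factor_closed_kappa_kstar subword_closed_imp_factor_closed by blast
qed

lemma two_distinct_letters:
  assumes "card (UNIV :: 'a::finite set) \<ge> 2"
  obtains a b :: "'a::finite" where "a \<noteq> b"
proof -
  obtain x :: 'a where True by simp
  have "\<exists>y::'a. y \<noteq> x"
  proof (rule ccontr)
    assume "\<not> (\<exists>y::'a. y \<noteq> x)"
    then have univ: "(UNIV :: 'a set) = {x}" by auto
    have "card (UNIV :: 'a set) = 1" unfolding univ by simp
    then show False using assms by simp
  qed
  then show ?thesis using that by blast
qed

theorem kstar_bounds_tight:
  assumes "card (UNIV :: 'a::finite set) \<ge> 2"
  shows "(\<forall>n\<ge>2. (\<exists>L :: 'a list set. regular L \<and> prefix_closed L \<and> kappa L = n \<and>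
                     kappa (kstar L) = 2 ^ (n - 2) + 1) \<and>
                (\<exists>L :: 'a list set. regular L \<and> subword_closed L \<and> kappa L = n \<and>
                     kappa (kstar L) = 2)) \<and>
         (\<forall>n\<ge>3. (\<exists>L :: 'a list set. regular L \<and> suffix_closed L \<and> kappa L = n \<and>
                     L = kstar L \<and> kappa (kstar L) = n) \<and>
                (\<exists>L :: 'a list set. regular L \<and> suffix_closed L \<and> kappa L = n \<and>
                     L \<noteq> kstar L \<and> kappa (kstar L) = n - 1))"
proof -
  obtain a b :: "'a" where ab: "a \<noteq> b" using two_distinct_letters[OF assms] .
  interpret two_letters a b by unfold_locales (rule ab)
  have prefix: "\<exists>L :: 'a list set. regular L \<and> prefix_closed L \<and> kappa L = n \<and>
      kappa (kstar L) = 2 ^ (n - 2) + 1" if "n \<ge> 2" for n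
  proof -
    interpret prefix_witness "n - 2" a b by unfold_locales (rule ab)
    have "n - 2 + 2 = n" using that by simp
    then show ?thesis using prefix_witness_exists by simp
  qed
  show ?thesis
    by (intro conjI allI impI prefix subword_witness suffix_star_witness suffix_nonstar_witness)
qed

theorem theorem4:
  shows
   "(\<forall>L :: ('a::finite) list set. regular L \<longrightarrow>
       ((kappa L = 1 \<and> closed_lang L \<longrightarrow> kappa (kstar L) \<le> 2) \<and>
        (\<forall>n. kappa L = n \<and> n \<ge> 2 \<longrightarrow>
           (prefix_closed L \<longrightarrow> kappa (kstar L) \<le> 2 ^ (n - 2) + 1) \<and>
           (suffix_closed L \<longrightarrow>
              (L = kstar L \<longrightarrow> kappa (kstar L) \<le> n) \<and>
              (L \<noteq> kstar L \<longrightarrow> kappa (kstar L) \<le> n - 1)) \<and>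
           (factor_closed L \<or> subword_closed L \<longrightarrow> kappa (kstar L) \<le> 2))))
    \<and>
    (card (UNIV :: 'a set) \<ge> 2 \<longrightarrow>
       (\<forall>n\<ge>2. (\<exists>L :: 'a list set. regular L \<and> prefix_closed L \<and> kappa L = n \<and>
                   kappa (kstar L) = 2 ^ (n - 2) + 1) \<and>
               (\<exists>L :: 'a list set. regular L \<and> subword_closed L \<and> kappa L = n \<and>
                   kappa (kstar L) = 2)) \<and>
       (\<forall>n\<ge>3. (\<exists>L :: 'a list set. regular L \<and> suffix_closed L \<and> kappa L = n \<and>
                   L = kstar L \<and> kappa (kstar L) = n) \<and>
               (\<exists>L :: 'a list set. regular L \<and> suffix_closed L \<and> kappa L = n \<and>
                   L \<noteq> kstar L \<and> kappa (kstar L) = n - 1)))"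
  by (rule conjI[OF allI[OF impI[OF kstar_upper_bounds]] impI[OF kstar_bounds_tight]])

end
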